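(* Let $n\in\mathbb{N}$, $x_1,\dots,x_n\in K^\vee\setminus K$, $t_1,\dots,t_n>0$, and put $r_i=d(x_i,K)$. Let $\pi:K^\vee\to K^\vee/K$ be the canonical quotient map. Let $f_1,\dots,f_n$ be the canonical unit vectors of $(K^\vee)^n$ and let $E=[f_1,\dots,f_n,(x_1,\dots,x_n)]$, an $(n+1)$-dimensional subspace of $((K^\vee)^n,|\cdot|_{t_1}\times\cdots\times|\cdot|_{t_n})$. Then: (1) If $E$ is indecomposable, then $r_1t_1=\cdots=r_nt_n$ and $\{\pi(x_1),\dots,\pi(x_n)\}$ is an orthogonal set. (2) Suppose $r_1t_1=\cdots=r_nt_n=:t$ and $\{\pi(x_1),\dots,\pi(x_n)\}$ is an orthogonal set. Let $e_1,\dots,e_{n+1}\in E'$ be the dual basis of $f_1,\dots,f_n,(x_1,\dots,x_n)$. Then the linear map $E'\to([1,x_1,\dots,x_n],|\cdot|_{1/t})$ with $e_i\mapsto -x_i$ ($1\le i\le n$) and $e_{n+1}\mapsto 1$ is an isometry. In particular $E$ is indecomposable and all $n$-dimensional subspaces of $E$ are isometrically isomorphic to $(K^n,|\cdot|_{t_1}\times\cdots\times|\cdot|_{t_n})$.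
   Context: $K$ is a complete non-archimedean non-trivially valued field which is not spherically complete; $K^\vee$ is a fixed spherically complete immediate extension of $K$. $d(x,K)=\inf_{a\in K}|x-a|$; $K^\vee/K$ carries the quotient norm. For $t>0$, $|z|_t=t|z|$; $((K^\vee)^n,|\cdot|_{t_1}\times\cdots\times|\cdot|_{t_n})$ is $(K^\vee)^n$ as a $K$-normed space with norm $\max_it_i|z_i|$, and subspaces get the induced norm; $(K^n,|\cdot|_{t_1}\times\cdots\times|\cdot|_{t_n})$ is the analogous space over $K$. $([1,x_1,\dots,x_n],|\cdot|_s)$ is the $K$-span of $1,x_1,\dots,x_n$ in $K^\vee$ with norm $|\cdot|_s$. $[\cdot]$ denotes $K$-linear span. $E'$ is the dual with operator norm. A normed space is decomposable if it is isometrically isomorphic to a max-norm direct sum of two nonzero normed spaces, indecomposable otherwise. A set $S\not\ni0$ is orthogonal if $\|\sum\lambda_is_i\|=\max\|\lambda_is_i\|$ for finitely many distinct $s_i\in S$. *)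

theory Defs
  imports Complex_Main
begin

text \<open>The big field K^vee is the type 'a; K is a subset of it (a subfield);
  v is the absolute value of K^vee (restricting to that of K).\<close>

definition nonarch_abs :: "('a::field \<Rightarrow> real) \<Rightarrow> bool" where
  "nonarch_abs v \<longleftrightarrow> (\<forall>x. 0 \<le> v x) \<and> (\<forall>x. v x = 0 \<longleftrightarrow> x = 0)
     \<and> (\<forall>x y. v (x * y) = v x * v y) \<and> (\<forall>x y. v (x + y) \<le> max (v x) (v y))"

definition is_subfield :: "'a::field set \<Rightarrow> bool" where
  "is_subfield K \<longleftrightarrow> 0 \<in> K \<and> 1 \<in> K \<and> (\<forall>a\<in>K. \<forall>b\<in>K. a + b \<in> K \<and> a * b \<in> K \<and> a - b \<in> K)
     \<and> (\<forall>a\<in>K. a \<noteq> 0 \<longrightarrow> inverse a \<in> K)"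

definition complete_wrt :: "'a::field set \<Rightarrow> ('a \<Rightarrow> real) \<Rightarrow> bool" where
  "complete_wrt S v \<longleftrightarrow> (\<forall>s::nat\<Rightarrow>'a. (\<forall>k. s k \<in> S) \<longrightarrow>
      (\<forall>e>0. \<exists>N. \<forall>p\<ge>N. \<forall>q\<ge>N. v (s p - s q) < e) \<longrightarrow>
      (\<exists>l\<in>S. \<forall>e>0. \<exists>N. \<forall>p\<ge>N. v (s p - l) < e))"

definition nontrivial_on :: "'a::field set \<Rightarrow> ('a \<Rightarrow> real) \<Rightarrow> bool" where
  "nontrivial_on S v \<longleftrightarrow> (\<exists>a\<in>S. a \<noteq> 0 \<and> v a \<noteq> 1)"

definition cball_in :: "'a::field set \<Rightarrow> ('a \<Rightarrow> real) \<Rightarrow> 'a \<Rightarrow> real \<Rightarrow> 'a set" where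
  "cball_in S v a r = {y\<in>S. v (y - a) \<le> r}"

definition spherically_complete :: "'a::field set \<Rightarrow> ('a \<Rightarrow> real) \<Rightarrow> bool" where
  "spherically_complete S v \<longleftrightarrow>
     (\<forall>C::('a \<times> real) set. C \<noteq> {} \<longrightarrow> (\<forall>(a,r)\<in>C. a \<in> S \<and> 0 < r) \<longrightarrow>
        (\<forall>(a,r)\<in>C. \<forall>(b,s)\<in>C. cball_in S v a r \<subseteq> cball_in S v b s \<or> cball_in S v b s \<subseteq> cball_in S v a r) \<longrightarrow>
        (\<Inter>(a,r)\<in>C. cball_in S v a r) \<noteq> {})"

text \<open>Immediate extension: same value group and same residue field.\<close>
definition immediate_ext :: "'a::field set \<Rightarrow> ('a \<Rightarrow> real) \<Rightarrow> bool" where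
  "immediate_ext K v \<longleftrightarrow> v ` (UNIV - {0}) = v ` (K - {0})
     \<and> (\<forall>y. v y \<le> 1 \<longrightarrow> (\<exists>a\<in>K. v a \<le> 1 \<and> v (y - a) < 1))"

text \<open>Distance to K, d(x,K); this is also the quotient norm of pi(x) in K^vee/K.\<close>
definition distK :: "'a::field set \<Rightarrow> ('a \<Rightarrow> real) \<Rightarrow> 'a \<Rightarrow> real" where
  "distK K v x = (INF a\<in>K. v (x - a))"

text \<open>The family pi(x_0),...,pi(x_{n-1}) in K^vee/K (quotient norm) is orthogonal:
  no pi(x_i) is 0, and norm of sum lambda_i pi(x_i) = max of norms of lambda_i pi(x_i).\<close>
definition orth_mod :: "'a::field set \<Rightarrow> ('a \<Rightarrow> real) \<Rightarrow> nat \<Rightarrow> (nat \<Rightarrow> 'a) \<Rightarrow> bool" where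
  "orth_mod K v n x \<longleftrightarrow> (\<forall>i<n. x i \<notin> K) \<and>
     (\<forall>lam. (\<forall>i<n. lam i \<in> K) \<longrightarrow>
        distK K v (\<Sum>i<n. lam i * x i) = Max ((\<lambda>i. v (lam i) * distK K v (x i)) ` {..<n}))"

section \<open>Vectors in (K^vee)^n, represented as nat => 'a (coordinates 0..n-1)\<close>

definition vadd :: "(nat \<Rightarrow> 'a::field) \<Rightarrow> (nat \<Rightarrow> 'a) \<Rightarrow> nat \<Rightarrow> 'a" where
  "vadd y z = (\<lambda>i. y i + z i)"

definition vsmul :: "'a::field \<Rightarrow> (nat \<Rightarrow> 'a) \<Rightarrow> nat \<Rightarrow> 'a" where
  "vsmul c y = (\<lambda>i. c * y i)"

definition vzero :: "nat \<Rightarrow> 'a::field" where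
  "vzero = (\<lambda>i. 0)"

definition kspan :: "'a::field set \<Rightarrow> (nat \<Rightarrow> 'a) list \<Rightarrow> (nat \<Rightarrow> 'a) set" where
  "kspan K bs = {(\<lambda>i. \<Sum>j<length bs. c j * (bs ! j) i) | c. \<forall>j<length bs. c j \<in> K}"

definition kspan1 :: "'a::field set \<Rightarrow> 'a list \<Rightarrow> 'a set" where
  "kspan1 K ys = {(\<Sum>j<length ys. c j * ys ! j) | c. \<forall>j<length ys. c j \<in> K}"

definition klin_indep :: "'a::field set \<Rightarrow> (nat \<Rightarrow> 'a) list \<Rightarrow> bool" where
  "klin_indep K bs \<longleftrightarrow> (\<forall>c. (\<forall>j<length bs. c j \<in> K) \<longrightarrow>
      (\<lambda>i. \<Sum>j<length bs. c j * (bs ! j) i) = vzero \<longrightarrow> (\<forall>j<length bs. c j = 0))"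

definition ksubspace :: "'a::field set \<Rightarrow> (nat \<Rightarrow> 'a) set \<Rightarrow> bool" where
  "ksubspace K D \<longleftrightarrow> vzero \<in> D \<and> (\<forall>y\<in>D. \<forall>z\<in>D. vadd y z \<in> D) \<and> (\<forall>c\<in>K. \<forall>y\<in>D. vsmul c y \<in> D)"

definition kdim_is :: "'a::field set \<Rightarrow> (nat \<Rightarrow> 'a) set \<Rightarrow> nat \<Rightarrow> bool" where
  "kdim_is K D m \<longleftrightarrow> (\<exists>bs. length bs = m \<and> klin_indep K bs \<and> kspan K bs = D)"

definition unitv :: "nat \<Rightarrow> nat \<Rightarrow> 'a::field" where
  "unitv i = (\<lambda>k. if k = i then 1 else 0)"

definition xvec :: "nat \<Rightarrow> (nat \<Rightarrow> 'a::field) \<Rightarrow> nat \<Rightarrow> 'a" where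
  "xvec n x = (\<lambda>k. if k < n then x k else 0)"

definition Espace :: "'a::field set \<Rightarrow> nat \<Rightarrow> (nat \<Rightarrow> 'a) \<Rightarrow> (nat \<Rightarrow> 'a) set" where
  "Espace K n x = kspan K (map unitv [0..<n] @ [xvec n x])"

definition pnorm :: "nat \<Rightarrow> (nat \<Rightarrow> real) \<Rightarrow> ('a::field \<Rightarrow> real) \<Rightarrow> (nat \<Rightarrow> 'a) \<Rightarrow> real" where
  "pnorm n t v z = Max ((\<lambda>i. t i * v (z i)) ` {..<n})"

text \<open>This is equivalent to being
  isometrically isomorphic to a max-norm direct sum of two nonzero normed spaces.\<close>
definition decomposable :: "'a::field set \<Rightarrow> ((nat \<Rightarrow> 'a) \<Rightarrow> real) \<Rightarrow> (nat \<Rightarrow> 'a) set \<Rightarrow> bool" where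
  "decomposable K N E \<longleftrightarrow> (\<exists>D1 D2. ksubspace K D1 \<and> ksubspace K D2 \<and> D1 \<subseteq> E \<and> D2 \<subseteq> E
      \<and> D1 \<noteq> {vzero} \<and> D2 \<noteq> {vzero}
      \<and> (\<forall>y\<in>E. \<exists>!p. fst p \<in> D1 \<and> snd p \<in> D2 \<and> y = vadd (fst p) (snd p))
      \<and> (\<forall>d1\<in>D1. \<forall>d2\<in>D2. N (vadd d1 d2) = max (N d1) (N d2)))"

definition indecomposable :: "'a::field set \<Rightarrow> ((nat \<Rightarrow> 'a) \<Rightarrow> real) \<Rightarrow> (nat \<Rightarrow> 'a) set \<Rightarrow> bool" where
  "indecomposable K N E \<longleftrightarrow> \<not> decomposable K N E"

definition klin_functional :: "'a::field set \<Rightarrow> (nat \<Rightarrow> 'a) set \<Rightarrow> ((nat \<Rightarrow> 'a) \<Rightarrow> 'a) \<Rightarrow> bool" where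
  "klin_functional K E phi \<longleftrightarrow> (\<forall>y\<in>E. phi y \<in> K) \<and> (\<forall>y\<in>E. \<forall>z\<in>E. phi (vadd y z) = phi y + phi z)
     \<and> (\<forall>c\<in>K. \<forall>y\<in>E. phi (vsmul c y) = c * phi y)"

definition opnorm :: "('a::field \<Rightarrow> real) \<Rightarrow> ((nat \<Rightarrow> 'a) \<Rightarrow> real) \<Rightarrow> (nat \<Rightarrow> 'a) set \<Rightarrow> ((nat \<Rightarrow> 'a) \<Rightarrow> 'a) \<Rightarrow> real" where
  "opnorm v N E phi = Sup ((\<lambda>y. v (phi y) / N y) ` (E - {vzero}))"

definition Kn :: "'a::field set \<Rightarrow> nat \<Rightarrow> (nat \<Rightarrow> 'a) set" where
  "Kn K n = {a. (\<forall>i<n. a i \<in> K) \<and> (\<forall>i\<ge>n. a i = 0)}"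

definition iso_to_Kn :: "'a::field set \<Rightarrow> ('a \<Rightarrow> real) \<Rightarrow> nat \<Rightarrow> (nat \<Rightarrow> real)
    \<Rightarrow> ((nat \<Rightarrow> 'a) \<Rightarrow> real) \<Rightarrow> (nat \<Rightarrow> 'a) set \<Rightarrow> bool" where
  "iso_to_Kn K v n t N D \<longleftrightarrow> (\<exists>T. bij_betw T (Kn K n) D
      \<and> (\<forall>a\<in>Kn K n. \<forall>b\<in>Kn K n. T (vadd a b) = vadd (T a) (T b))
      \<and> (\<forall>c\<in>K. \<forall>a\<in>Kn K n. T (vsmul c a) = vsmul c (T a))
      \<and> (\<forall>a\<in>Kn K n. N (T a) = pnorm n t v a))"

end

(* Write a functional phi on E through a_i = phi(f_i) and its image
   w = phi(x_1, ..., x_n) - sum a_i x_i in [1, x_1, ..., x_n].  For y = sum c_i f_i + c (x_1, ..., x_n)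
   one has phi(y) = sum a_i y_i + c w, and if all r_i t_i equal t and the classes of the x_i are
   orthogonal, then d(w, K) = max |a_i| r_i; hence ||phi|| = |w| / t.

   Everything else rests on coordinates that dominate the norm.  A hyperplane of E on which one
   coordinate never dominates is an orthogonal complement of a line; this gives the decompositions of
   part (1).  A hyperplane containing a vector whose k-th coordinate dominates all others, for k with
   |a_k| / t_k maximal, is isometric to K^n.  Indecomposability uses that K^vee / K is immediate: an
   orthogonal decomposition of E would produce a functional whose image w is strictly smaller than
   its norm allows. *)

theory Submission
  imports Defs
begin

section \<open>Valued fields and immediate extensions\<close>

locale valued_extension =
  fixes K :: "'a::field set" and v :: "'a \<Rightarrow> real"
  assumes nonarch: "nonarch_abs v" and subfield: "is_subfield K"
    and complete: "complete_wrt K v" and immediate: "immediate_ext K v"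
begin

lemma v_nonneg [simp]: "0 \<le> v a"
  and v_eq_0_iff [simp]: "v a = 0 \<longleftrightarrow> a = 0"
  and v_mult [simp]: "v (a * b) = v a * v b"
  and v_add_le_max: "v (a + b) \<le> max (v a) (v b)"
  using nonarch unfolding nonarch_abs_def by blast+

lemma v_pos_iff: "0 < v a \<longleftrightarrow> a \<noteq> 0"
  using v_nonneg[of a] v_eq_0_iff[of a] by linarith

lemma v_zero [simp]: "v 0 = 0"
  by simp

lemma v_one [simp]: "v 1 = 1"
proof -
  have "v 1 * v 1 = v 1 * 1" using v_mult[of 1 1] by simp
  moreover have "v 1 \<noteq> 0" by simp
  ultimately show ?thesis by (metis mult_left_cancel)
qed

lemma v_minus [simp]: "v (- a) = v a"
proof -
  have "v (-1) * v (-1) = 1" using v_mult[of "-1" "-1"] by simp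
  then have "v (-1) = 1 \<or> v (-1) = -1" using square_eq_1_iff by blast
  then have "v (-1) = 1" using v_nonneg[of "-1"] by linarith
  then show ?thesis using v_mult[of "-1" a] by simp
qed

lemma v_inverse [simp]: "v (inverse a) = inverse (v a)"
proof (cases "a = 0")
  case False
  then have "v a * v (inverse a) = 1" using v_mult[of a "inverse a"] by simp
  then show ?thesis by (rule inverse_unique[symmetric])
qed simp

lemma v_divide [simp]: "v (a / b) = v a / v b"
  by (simp add: divide_inverse)

lemma v_diff_le_max: "v (a - b) \<le> max (v a) (v b)"
  using v_add_le_max[of a "- b"] by simp

lemma v_add_eq_left: assumes "v b < v a" shows "v (a + b) = v a"
proof -
  have "v (a + b) \<le> v a" using v_add_le_max[of a b] assms by simp
  moreover have "v a \<le> max (v (a + b)) (v b)" using v_diff_le_max[of "a + b" b] by simp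
  ultimately show ?thesis using assms by linarith
qed

lemma v_sum_le: "finite S \<Longrightarrow> (\<And>i. i \<in> S \<Longrightarrow> v (f i) \<le> M) \<Longrightarrow> 0 \<le> M \<Longrightarrow> v (sum f S) \<le> M"
  by (induction S rule: finite_induct) (auto intro: order_trans[OF v_add_le_max])

lemma v_sum_less: "finite S \<Longrightarrow> (\<And>i. i \<in> S \<Longrightarrow> v (f i) < M) \<Longrightarrow> 0 < M \<Longrightarrow> v (sum f S) < M"
  by (induction S rule: finite_induct) (auto intro: le_less_trans[OF v_add_le_max])

lemma K_zero [simp]: "0 \<in> K" and K_one [simp]: "1 \<in> K"
  and K_add [intro]: "a \<in> K \<Longrightarrow> b \<in> K \<Longrightarrow> a + b \<in> K"
  and K_mult [intro]: "a \<in> K \<Longrightarrow> b \<in> K \<Longrightarrow> a * b \<in> K"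
  and K_diff [intro]: "a \<in> K \<Longrightarrow> b \<in> K \<Longrightarrow> a - b \<in> K"
  using subfield unfolding is_subfield_def by auto

lemma K_uminus [intro]: "a \<in> K \<Longrightarrow> - a \<in> K"
  using K_diff[of 0 a] by simp

lemma K_inverse [intro]: "a \<in> K \<Longrightarrow> inverse a \<in> K"
  using subfield unfolding is_subfield_def by (cases "a = 0") auto

lemma K_divide [intro]: "a \<in> K \<Longrightarrow> b \<in> K \<Longrightarrow> a / b \<in> K"
  by (simp add: divide_inverse K_mult K_inverse)

lemma K_sum [intro]: "(\<And>i. i \<in> S \<Longrightarrow> f i \<in> K) \<Longrightarrow> sum f S \<in> K"
  by (induction S rule: infinite_finite_induct) auto

lemma immediate_value:
  assumes "u \<noteq> 0" obtains a where "a \<in> K" "a \<noteq> 0" "v a = v u"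
proof -
  have "v u \<in> v ` (K - {0})"
    using assms immediate unfolding immediate_ext_def by blast
  then obtain a where "a \<in> K - {0}" "v u = v a" by (rule imageE)
  then show ?thesis using that by (metis DiffD1 DiffD2 singletonI)
qed

lemma immediate_approx:
  assumes "u \<noteq> 0" obtains b where "b \<in> K" "v (u - b) < v u"
proof -
  obtain a where a: "a \<in> K" "a \<noteq> 0" "v a = v u" using immediate_value assms .
  then have "v (u / a) \<le> 1" by simp
  then obtain c where c: "c \<in> K" "v (u / a - c) < 1"
    using immediate unfolding immediate_ext_def by blast
  have "u - a * c = a * (u / a - c)" using a by (simp add: field_simps)
  then have "v (u - a * c) = v a * v (u / a - c)" by simp
  also have "\<dots> < v u" using a c assms by (simp add: v_pos_iff)
  finally show ?thesis using that a c by blast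
qed

lemma immediate_approx_multiple:
  assumes "u \<noteq> 0" "w \<noteq> 0"
  obtains b where "b \<in> K" "v (u - b * w) < v u"
proof -
  have "u / w \<noteq> 0" using assms by simp
  then obtain b where b: "b \<in> K" "v (u / w - b) < v (u / w)" by (rule immediate_approx)
  have "u - b * w = w * (u / w - b)" using assms(2) by (simp add: field_simps)
  then have "v (u - b * w) = v w * v (u / w - b)" by (simp only: v_mult)
  also have "\<dots> < v w * v (u / w)" using b(2) assms(2) by (simp add: v_pos_iff del: v_divide)
  also have "\<dots> = v u" using assms(2) by simp
  finally show ?thesis using that b(1) by blast
qed

lemma K_closed:
  assumes approx: "\<And>e. 0 < e \<Longrightarrow> \<exists>a\<in>K. v (y - a) < e"
  shows "y \<in> K"
proof -
  have "\<forall>k::nat. \<exists>a\<in>K. v (y - a) < 1 / Suc k" using approx by simp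
  then obtain s where s: "\<And>k. s k \<in> K" "\<And>k. v (y - s k) < 1 / Suc k" by metis
  have eventually_close: "\<exists>M. \<forall>p\<ge>M. v (y - s p) < e" if "0 < e" for e
  proof -
    obtain M :: nat where M: "1 / Suc M < e" using \<open>0 < e\<close> nat_approx_posE by blast
    have "v (y - s p) < e" if "M \<le> p" for p
    proof -
      have "1 / real (Suc p) \<le> 1 / Suc M" using that by (simp add: frac_le)
      then show ?thesis using s(2)[of p] M by linarith
    qed
    then show ?thesis by blast
  qed
  have "\<forall>e>0. \<exists>M. \<forall>p\<ge>M. \<forall>q\<ge>M. v (s p - s q) < e"
  proof (intro allI impI)
    fix e :: real assume "0 < e"
    then obtain M where "\<forall>p\<ge>M. v (y - s p) < e" using eventually_close by blast
    moreover have "v (s p - s q) \<le> max (v (y - s q)) (v (y - s p))" for p q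
      using v_diff_le_max[of "y - s q" "y - s p"] by simp
    ultimately have "\<forall>p\<ge>M. \<forall>q\<ge>M. v (s p - s q) < e" by (meson le_less_trans max_less_iff_conj)
    then show "\<exists>M. \<forall>p\<ge>M. \<forall>q\<ge>M. v (s p - s q) < e" ..
  qed
  moreover have "\<forall>k. s k \<in> K" using s(1) ..
  moreover have "(\<forall>k. s k \<in> K) \<longrightarrow> (\<forall>e>0. \<exists>M. \<forall>p\<ge>M. \<forall>q\<ge>M. v (s p - s q) < e) \<longrightarrow>
      (\<exists>l\<in>K. \<forall>e>0. \<exists>M. \<forall>p\<ge>M. v (s p - l) < e)"
    using complete[unfolded complete_wrt_def] by (rule spec)
  ultimately obtain l where l: "l \<in> K" "\<forall>e>0. \<exists>M. \<forall>p\<ge>M. v (s p - l) < e"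
    by blast
  have "v (y - l) < e" if "0 < e" for e
  proof -
    obtain M1 M2 where "\<forall>p\<ge>M1. v (y - s p) < e" "\<forall>p\<ge>M2. v (s p - l) < e"
      using eventually_close l(2) \<open>0 < e\<close> by blast
    then have "v (y - s (max M1 M2)) < e" "v (s (max M1 M2) - l) < e" by simp_all
    then show ?thesis using v_add_le_max[of "y - s (max M1 M2)" "s (max M1 M2) - l"] by simp
  qed
  then have "y = l" using v_pos_iff[of "y - l"] by (metis less_irrefl right_minus_eq)
  then show ?thesis using l by simp
qed

abbreviation dK :: "'a \<Rightarrow> real" where "dK \<equiv> distK K v"

lemma bdd_below_dist: "bdd_below ((\<lambda>a. v (y - a)) ` K)"
  by (rule bdd_belowI[of _ 0]) auto

lemma distK_le: "a \<in> K \<Longrightarrow> dK y \<le> v (y - a)"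
  unfolding distK_def by (rule cINF_lower[OF bdd_below_dist])

lemma distK_greatest: "(\<And>a. a \<in> K \<Longrightarrow> m \<le> v (y - a)) \<Longrightarrow> m \<le> dK y"
  unfolding distK_def by (rule cINF_greatest) auto

lemma distK_nonneg: "0 \<le> dK y"
  by (rule distK_greatest) simp

lemma distK_less_imp: "dK y < e \<Longrightarrow> \<exists>a\<in>K. v (y - a) < e"
  unfolding distK_def using cINF_less_iff[OF _ bdd_below_dist] by (metis K_zero empty_iff)

lemma distK_of_K: "y \<in> K \<Longrightarrow> dK y = 0"
  using distK_le[of y y] distK_nonneg[of y] by simp

lemma distK_add_K: assumes "b \<in> K" shows "dK (b + y) = dK y"
proof (rule antisym)
  show "dK (b + y) \<le> dK y"
  proof (rule distK_greatest)
    fix a assume "a \<in> K"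
    then have "dK (b + y) \<le> v (b + y - (a + b))" using distK_le assms by blast
    then show "dK (b + y) \<le> v (y - a)" by (simp add: algebra_simps)
  qed
  show "dK y \<le> dK (b + y)"
  proof (rule distK_greatest)
    fix a assume "a \<in> K"
    then have "dK y \<le> v (y - (a - b))" using distK_le assms by blast
    then show "dK y \<le> v (b + y - a)" by (simp add: algebra_simps)
  qed
qed

lemma distK_less_v: assumes "y \<notin> K" "a \<in> K" shows "dK y < v (y - a)"
proof -
  have "y - a \<noteq> 0" using assms by auto
  then obtain b where b: "b \<in> K" "v (y - a - b) < v (y - a)" using immediate_approx by blast
  have "dK y \<le> v (y - (a + b))" using distK_le b assms by blast
  then show ?thesis using b by (simp add: algebra_simps)
qed

lemma distK_pos: assumes "y \<notin> K" shows "0 < dK y"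
  using K_closed[of y] distK_less_imp[of y] distK_nonneg[of y] assms by force

lemma distK_add_le_max: "dK (y + z) \<le> max (dK y) (dK z)"
proof (rule field_le_epsilon)
  fix e :: real assume "0 < e"
  then obtain a b where "a \<in> K" "v (y - a) < dK y + e" "b \<in> K" "v (z - b) < dK z + e"
    using distK_less_imp[of y "dK y + e"] distK_less_imp[of z "dK z + e"] by auto
  moreover have "dK (y + z) \<le> v ((y - a) + (z - b))"
    using distK_le[of "a + b"] \<open>a \<in> K\<close> \<open>b \<in> K\<close> by (simp add: algebra_simps K_add)
  ultimately show "dK (y + z) \<le> max (dK y) (dK z) + e"
    using v_add_le_max[of "y - a" "z - b"] by linarith
qed

lemma distK_sum_le: "finite S \<Longrightarrow> (\<And>i. i \<in> S \<Longrightarrow> dK (f i) \<le> B) \<Longrightarrow> 0 \<le> B \<Longrightarrow> dK (sum f S) \<le> B"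
  by (induction S rule: finite_induct)
    (auto simp: distK_of_K intro: order_trans[OF distK_add_le_max])

lemma v_affine_ge: assumes "c \<in> K" "mu \<in> K" "y \<notin> K" shows "v mu * dK y \<le> v (c + mu * y)"
proof (cases "mu = 0")
  case False
  have "dK y \<le> v (y - (- c / mu))" using distK_le assms by blast
  moreover have "c + mu * y = mu * (y - (- c / mu))" using False by (simp add: field_simps)
  ultimately show ?thesis by (simp add: mult_left_mono)
qed (simp add: distK_nonneg)

lemma distK_mult_K: assumes "c \<in> K" shows "dK (c * y) = v c * dK y"
proof (cases "c = 0")
  case False
  then have vc: "0 < v c" by (simp add: v_pos_iff)
  show ?thesis
  proof (rule antisym)
    have "dK (c * y) / v c \<le> dK y"
    proof (rule distK_greatest)
      fix a assume "a \<in> K"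
      then have "dK (c * y) \<le> v (c * y - c * a)" using distK_le assms by blast
      also have "\<dots> = v c * v (y - a)" by (metis right_diff_distrib v_mult)
      finally have "dK (c * y) \<le> v c * v (y - a)" .
      then show "dK (c * y) / v c \<le> v (y - a)" using vc by (simp add: field_simps)
    qed
    then show "dK (c * y) \<le> v c * dK y" using vc by (simp add: field_simps)
    show "v c * dK y \<le> dK (c * y)"
    proof (rule distK_greatest)
      fix a assume "a \<in> K"
      then have "dK y \<le> v (y - a / c)" using distK_le assms by blast
      moreover have "c * y - a = c * (y - a / c)" using False by (simp add: field_simps)
      ultimately show "v c * dK y \<le> v (c * y - a)" using vc by simp
    qed
  qed
qed (simp add: distK_of_K)

lemma ksubspace_vadd: "ksubspace K D \<Longrightarrow> y \<in> D \<Longrightarrow> z \<in> D \<Longrightarrow> vadd y z \<in> D"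
  and ksubspace_vsmul: "ksubspace K D \<Longrightarrow> c \<in> K \<Longrightarrow> y \<in> D \<Longrightarrow> vsmul c y \<in> D"
  and vzero_in_ksubspace: "ksubspace K D \<Longrightarrow> vzero \<in> D"
  unfolding ksubspace_def by blast+

lemma ksubspace_diff:
  assumes "ksubspace K D" "a \<in> D" "b \<in> D" shows "vadd a (vsmul (- 1) b) \<in> D"
  using assms unfolding ksubspace_def by (simp add: K_uminus)

lemma vadd_commute: "vadd y z = vadd z y"
  unfolding vadd_def by (simp add: add.commute)

lemma vadd_vzero [simp]: "vadd y vzero = y" "vadd vzero y = y"
  unfolding vadd_def vzero_def by auto

lemma vadd_minus_eq_vzero_iff: "vadd y (vsmul (- 1) z) = vzero \<longleftrightarrow> y = z"
  unfolding vadd_def vsmul_def vzero_def by (simp add: fun_eq_iff)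

lemma decomposableI:
  assumes sub: "ksubspace K D1" "ksubspace K D2" "D1 \<subseteq> F" "D2 \<subseteq> F"
    and nontriv: "D1 \<noteq> {vzero}" "D2 \<noteq> {vzero}"
    and disjoint: "D1 \<inter> D2 \<subseteq> {vzero}"
    and spans: "\<And>y. y \<in> F \<Longrightarrow> \<exists>d1\<in>D1. \<exists>d2\<in>D2. y = vadd d1 d2"
    and orth: "\<And>d1 d2. d1 \<in> D1 \<Longrightarrow> d2 \<in> D2 \<Longrightarrow> Nm (vadd d1 d2) = max (Nm d1) (Nm d2)"
  shows "decomposable K Nm F"
proof -
  have unique: "d1 = d1' \<and> d2 = d2'"
    if d: "d1 \<in> D1" "d2 \<in> D2" "d1' \<in> D1" "d2' \<in> D2" and eq: "vadd d1 d2 = vadd d1' d2'"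
    for d1 d2 d1' d2'
  proof -
    have same: "vadd d1 (vsmul (- 1) d1') = vadd d2' (vsmul (- 1) d2)"
    proof
      fix i
      have "d1 i + d2 i = d1' i + d2' i" using fun_cong[OF eq, of i] by (simp add: vadd_def)
      then show "vadd d1 (vsmul (- 1) d1') i = vadd d2' (vsmul (- 1) d2) i"
        by (simp add: vadd_def vsmul_def algebra_simps)
    qed
    moreover have "vadd d1 (vsmul (- 1) d1') \<in> D1" "vadd d2' (vsmul (- 1) d2) \<in> D2"
      using ksubspace_diff sub(1,2) d by blast+
    ultimately have "vadd d1 (vsmul (- 1) d1') \<in> D1 \<inter> D2" by simp
    then have zero1: "vadd d1 (vsmul (- 1) d1') = vzero" using disjoint by blast
    then have zero2: "vadd d2' (vsmul (- 1) d2) = vzero" using same by simp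
    show ?thesis using zero1 zero2 unfolding vadd_minus_eq_vzero_iff by simp
  qed
  have "\<exists>!p. fst p \<in> D1 \<and> snd p \<in> D2 \<and> y = vadd (fst p) (snd p)" if y: "y \<in> F" for y
  proof -
    obtain d1 d2 where d: "d1 \<in> D1" "d2 \<in> D2" "y = vadd d1 d2" using spans[OF y] by blast
    show ?thesis
    proof (rule ex1I[of _ "(d1, d2)"])
      fix p assume p: "fst p \<in> D1 \<and> snd p \<in> D2 \<and> y = vadd (fst p) (snd p)"
      then have "vadd (fst p) (snd p) = vadd d1 d2" using d(3) by metis
      then have "fst p = d1 \<and> snd p = d2" using unique p d(1,2) by blast
      then show "p = (d1, d2)" by (simp add: prod_eq_iff)
    qed (use d in simp)
  qed
  then show ?thesis
    unfolding decomposable_def using sub nontriv orth by blast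
qed

lemma exists_nontrivial_solution:
  "finite I \<Longrightarrow> card I < m \<Longrightarrow> (\<forall>i\<in>I. \<forall>j<m. M i j \<in> K) \<Longrightarrow>
   \<exists>a. (\<forall>j<m. a j \<in> K) \<and> (\<exists>j<m. a j \<noteq> 0) \<and> (\<forall>i\<in>I. (\<Sum>j<m. M i j * a j) = 0)"
proof (induction m arbitrary: I M)
  case 0
  then show ?case by simp
next
  case (Suc m)
  show ?case
  proof (cases "\<forall>i\<in>I. M i m = 0")
    case True
    define a where "a j = (if j = m then 1 else (0::'a))" for j
    have "(\<Sum>j<Suc m. M i j * a j) = M i m" for i
      unfolding a_def by (simp add: if_distrib sum.delta cong: if_cong)
    then show ?thesis using True by (intro exI[of _ a]) (auto simp: a_def)
  next
    case False
    then obtain i0 where i0: "i0 \<in> I" "M i0 m \<noteq> 0" by blast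
    define M' where "M' i j = M i j - (M i m / M i0 m) * M i0 j" for i j
    have "card (I - {i0}) = card I - 1" using Suc.prems(1) i0(1) by (simp add: card_Diff_singleton)
    moreover have "0 < card I" using Suc.prems(1) i0(1) card_gt_0_iff by blast
    ultimately have "card (I - {i0}) < m" using Suc.prems(2) by linarith
    moreover have "\<forall>i\<in>I - {i0}. \<forall>j<m. M' i j \<in> K"
      unfolding M'_def using Suc.prems(3) i0(1) by (auto intro!: K_diff K_mult K_divide)
    ultimately have "\<exists>a'. (\<forall>j<m. a' j \<in> K) \<and> (\<exists>j<m. a' j \<noteq> 0)
        \<and> (\<forall>i\<in>I - {i0}. (\<Sum>j<m. M' i j * a' j) = 0)"
      using Suc.IH[of "I - {i0}" M'] Suc.prems(1) by simp
    then obtain a' where a': "\<forall>j<m. a' j \<in> K" "\<exists>j<m. a' j \<noteq> 0"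
      "\<forall>i\<in>I - {i0}. (\<Sum>j<m. M' i j * a' j) = 0"
      by blast
    define s0 where "s0 = (\<Sum>j<m. M i0 j * a' j)"
    define a where "a j = (if j < m then a' j else if j = m then - s0 / M i0 m else 0)" for j
    have "s0 \<in> K" unfolding s0_def using Suc.prems(3) i0(1) a'(1) by (intro K_sum K_mult) auto
    then have "\<forall>j<Suc m. a j \<in> K"
      unfolding a_def using a'(1) Suc.prems(3) i0(1) by (auto intro!: K_divide K_uminus)
    moreover have "\<exists>j<Suc m. a j \<noteq> 0" using a'(2) unfolding a_def by (metis less_SucI)
    moreover have "(\<Sum>j<Suc m. M i j * a j) = 0" if i: "i \<in> I" for i
    proof -
      have row: "(\<Sum>j<Suc m. M i j * a j) = (\<Sum>j<m. M i j * a' j) - M i m * (s0 / M i0 m)"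
        unfolding a_def by simp
      show ?thesis
      proof (cases "i = i0")
        case False
        then have "(\<Sum>j<m. M' i j * a' j) = 0" using a'(3) i by blast
        moreover have "(\<Sum>j<m. M' i j * a' j) = (\<Sum>j<m. M i j * a' j) - (M i m / M i0 m) * s0"
          unfolding M'_def s0_def by (simp add: sum_subtractf sum_distrib_left algebra_simps)
        ultimately show ?thesis unfolding row by simp
      qed (unfold row s0_def, use i0(2) in simp)
    qed
    ultimately show ?thesis by blast
  qed
qed

lemma kspan_nth: assumes "l < length bs" shows "bs ! l \<in> kspan K bs"
proof -
  define c where "c j = (if j = l then 1 else (0::'a))" for j
  have "c j * (bs ! j) i = (if j = l then (bs ! l) i else 0)" for i j by (simp add: c_def)
  then have sum_eq: "(\<lambda>i. \<Sum>j<length bs. c j * (bs ! j) i) = bs ! l"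
    using assms by (simp add: sum.delta)
  have "\<forall>j<length bs. c j \<in> K" by (simp add: c_def)
  then show ?thesis unfolding kspan_def mem_Collect_eq by (intro exI[of _ c]) (simp add: sum_eq)
qed

end

section \<open>The space \<open>E\<close>\<close>

locale E_space = valued_extension +
  fixes n :: nat and x :: "nat \<Rightarrow> 'a" and t :: "nat \<Rightarrow> real"
  assumes n_pos: "1 \<le> n" and x_notin_K: "\<forall>i<n. x i \<notin> K" and t_pos: "\<forall>i<n. 0 < t i"
begin

abbreviation E :: "(nat \<Rightarrow> 'a) set" where "E \<equiv> Espace K n x"
abbreviation N :: "(nat \<Rightarrow> 'a) \<Rightarrow> real" where "N \<equiv> pnorm n t v"
abbreviation r :: "nat \<Rightarrow> real" where "r i \<equiv> dK (x i)"

lemma r_pos: "i < n \<Longrightarrow> 0 < r i"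
  using distK_pos x_notin_K by blast

text \<open>\<open>Evec c\<close> is \<open>c 0 f_1 + ... + c (n-1) f_n + c n (x_1, ..., x_n)\<close>: the coefficient of
  \<open>(x_1, ..., x_n)\<close> is stored at index \<open>n\<close>.\<close>
definition Evec :: "(nat \<Rightarrow> 'a) \<Rightarrow> nat \<Rightarrow> 'a" where
  "Evec c = (\<lambda>k. if k < n then c k + c n * x k else 0)"

definition Kcoeffs :: "(nat \<Rightarrow> 'a) \<Rightarrow> bool" where
  "Kcoeffs c \<longleftrightarrow> (\<forall>j\<le>n. c j \<in> K)"

lemma Evec_apply [simp]: "k < n \<Longrightarrow> Evec c k = c k + c n * x k"
  and Evec_apply_ge [simp]: "n \<le> k \<Longrightarrow> Evec c k = 0"
  by (simp_all add: Evec_def)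

lemma Espace_eq: "E = {Evec c | c. Kcoeffs c}"
proof -
  let ?bs = "map unitv [0..<n] @ [xvec n x]"
  have "(\<lambda>i. \<Sum>j<Suc n. c j * (?bs ! j) i) = Evec c" for c
  proof
    fix i
    have "(\<Sum>j<Suc n. c j * (?bs ! j) i) = (\<Sum>j<n. c j * unitv j i) + c n * xvec n x i"
      by (simp add: nth_append)
    also have "\<dots> = Evec c i"
      by (simp add: unitv_def xvec_def Evec_def if_distrib sum.delta cong: if_cong)
    finally show "(\<Sum>j<Suc n. c j * (?bs ! j) i) = Evec c i" .
  qed
  then show ?thesis
    unfolding Espace_def kspan_def Kcoeffs_def by (simp add: less_Suc_eq_le)
qed

lemma Evec_in_E: "Kcoeffs c \<Longrightarrow> Evec c \<in> E"
  using Espace_eq by blast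

lemma EspaceE:
  assumes "y \<in> E" obtains c where "Kcoeffs c" "y = Evec c"
  using assms Espace_eq by blast

lemma Evec_cong: "(\<And>j. j \<le> n \<Longrightarrow> a j = b j) \<Longrightarrow> Evec a = Evec b"
  unfolding Evec_def by (rule ext) simp

lemma Evec_add: "vadd (Evec a) (Evec b) = Evec (\<lambda>j. a j + b j)"
  unfolding Evec_def vadd_def by (rule ext) (simp add: algebra_simps)

lemma Evec_smul: "vsmul c (Evec a) = Evec (\<lambda>j. c * a j)"
  unfolding Evec_def vsmul_def by (rule ext) (simp add: algebra_simps)

lemma Evec_sum: "(\<lambda>k. \<Sum>l\<in>S. d l * Evec (G l) k) = Evec (\<lambda>j. \<Sum>l\<in>S. d l * G l j)"
  unfolding Evec_def
  by (rule ext) (simp add: sum.distrib sum_distrib_right sum_distrib_left algebra_simps)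

lemma vzero_eq_Evec: "vzero = Evec (\<lambda>j. 0)"
  unfolding Evec_def vzero_def by (rule ext) simp

lemma Kcoeffs_add: "Kcoeffs a \<Longrightarrow> Kcoeffs b \<Longrightarrow> Kcoeffs (\<lambda>j. a j + b j)"
  and Kcoeffs_smul: "c \<in> K \<Longrightarrow> Kcoeffs a \<Longrightarrow> Kcoeffs (\<lambda>j. c * a j)"
  and Kcoeffs_zero: "Kcoeffs (\<lambda>j. 0)"
  and Kcoeffs_delta: "c \<in> K \<Longrightarrow> Kcoeffs (\<lambda>j. if j = i then c else 0)"
  unfolding Kcoeffs_def by auto

lemma unitv_eq_Evec: "i < n \<Longrightarrow> unitv i = Evec (\<lambda>j. if j = i then 1 else 0)"
  unfolding unitv_def Evec_def by (rule ext) auto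

lemma xvec_eq_Evec: "xvec n x = Evec (\<lambda>j. if j = n then 1 else 0)"
  unfolding xvec_def Evec_def by (rule ext) auto

lemma vsmul_unitv_eq_Evec: "k < n \<Longrightarrow> vsmul l (unitv k) = Evec (\<lambda>j. if j = k then l else 0)"
  unfolding vsmul_def unitv_def Evec_def by (rule ext) auto

lemma unitv_in_E: "i < n \<Longrightarrow> unitv i \<in> E"
  using unitv_eq_Evec Evec_in_E Kcoeffs_delta[OF K_one] by metis

lemma xvec_in_E: "xvec n x \<in> E"
  using xvec_eq_Evec Evec_in_E Kcoeffs_delta[OF K_one] by metis

lemma E_vadd: "y \<in> E \<Longrightarrow> z \<in> E \<Longrightarrow> vadd y z \<in> E"
  by (metis EspaceE Evec_add Evec_in_E Kcoeffs_add)

lemma E_vsmul: "c \<in> K \<Longrightarrow> y \<in> E \<Longrightarrow> vsmul c y \<in> E"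
  by (metis EspaceE Evec_smul Evec_in_E Kcoeffs_smul)

lemma E_vanish: "y \<in> E \<Longrightarrow> n \<le> k \<Longrightarrow> y k = 0"
  by (metis EspaceE Evec_apply_ge)

text \<open>The coordinates are unique because \<open>x_1\<close> is not in \<open>K\<close>.\<close>
lemma Evec_inj:
  assumes "Kcoeffs a" "Kcoeffs b" "Evec a = Evec b" and "j \<le> n"
  shows "a j = b j"
proof -
  have coord: "a k + a n * x k = b k + b n * x k" if "k < n" for k
    using fun_cong[OF assms(3), of k] that by simp
  have last: "a n = b n"
  proof (rule ccontr)
    assume "a n \<noteq> b n"
    then have "x 0 = (b 0 - a 0) / (a n - b n)"
      using coord[of 0] n_pos by (simp add: field_simps)
    moreover have "(b 0 - a 0) / (a n - b n) \<in> K"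
      using assms(1,2) unfolding Kcoeffs_def by (intro K_divide K_diff) auto
    ultimately show False using x_notin_K n_pos by auto
  qed
  then show ?thesis using coord[of j] \<open>j \<le> n\<close> by (cases "j = n") auto
qed

lemma Evec_eq_vzero_iff: "Kcoeffs a \<Longrightarrow> Evec a = vzero \<longleftrightarrow> (\<forall>j\<le>n. a j = 0)"
  using Evec_inj[of a "\<lambda>j. 0"] Kcoeffs_zero vzero_eq_Evec Evec_cong by metis

lemma Evec_nonzero_if_last_one:
  assumes "Kcoeffs c" "c n = 1" "k < n" shows "Evec c k \<noteq> 0"
proof
  assume "Evec c k = 0"
  then have "x k = - c k" using assms(2,3) by (simp add: add_eq_0_iff)
  then show False using x_notin_K assms K_uminus unfolding Kcoeffs_def by (metis less_imp_le)
qed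

lemma v_last_coeff_le: "Kcoeffs c \<Longrightarrow> j < n \<Longrightarrow> v (c n) * r j \<le> v (Evec c j)"
  using v_affine_ge[of "c j" "c n" "x j"] x_notin_K unfolding Kcoeffs_def by simp

lemma pnorm_ge: "i < n \<Longrightarrow> t i * v (y i) \<le> N y"
  unfolding pnorm_def by (rule Max_ge) auto

lemma pnorm_le: "(\<And>i. i < n \<Longrightarrow> t i * v (y i) \<le> M) \<Longrightarrow> N y \<le> M"
  unfolding pnorm_def using n_pos by (subst Max_le_iff) (auto simp: lessThan_empty_iff)

lemma pnorm_less: "(\<And>i. i < n \<Longrightarrow> t i * v (y i) < M) \<Longrightarrow> N y < M"
  unfolding pnorm_def using n_pos by (subst Max_less_iff) (auto simp: lessThan_empty_iff)

lemma pnorm_nonneg: "0 \<le> N y"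
  using pnorm_ge[of 0 y] n_pos t_pos by (smt (verit) less_le_trans mult_nonneg_nonneg v_nonneg zero_less_one)

lemma pnorm_pos: assumes "y \<in> E" "y \<noteq> vzero" shows "0 < N y"
proof -
  obtain k where "y k \<noteq> 0" using assms(2) unfolding vzero_def by auto
  moreover from this have "k < n" using E_vanish[OF assms(1)] by (meson not_le)
  ultimately have "0 < t k * v (y k)" using t_pos by (simp add: v_pos_iff)
  then show ?thesis using pnorm_ge[OF \<open>k < n\<close>, of y] by linarith
qed

definition pnorm_except :: "nat \<Rightarrow> (nat \<Rightarrow> 'a) \<Rightarrow> real" where
  "pnorm_except k y = Max (insert 0 ((\<lambda>i. t i * v (y i)) ` ({..<n} - {k})))"

lemma pnorm_split: assumes "k < n" shows "N y = max (pnorm_except k y) (t k * v (y k))"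
proof -
  let ?f = "\<lambda>i. t i * v (y i)"
  have "N y = max 0 (N y)" using pnorm_nonneg[of y] by simp
  also have "\<dots> = Max (insert 0 (?f ` {..<n}))"
    unfolding pnorm_def using n_pos by (subst Max_insert) (auto simp: lessThan_empty_iff)
  also have "insert 0 (?f ` {..<n}) = insert (?f k) (insert 0 (?f ` ({..<n} - {k})))"
    using assms by auto
  also have "Max \<dots> = max (?f k) (pnorm_except k y)"
    unfolding pnorm_except_def by (subst Max_insert) auto
  finally show ?thesis by (simp add: max.commute)
qed

lemma pnorm_except_nonneg: "0 \<le> pnorm_except k y"
  unfolding pnorm_except_def by (rule Max_ge) auto

lemma pnorm_except_ge: "i < n \<Longrightarrow> i \<noteq> k \<Longrightarrow> t i * v (y i) \<le> pnorm_except k y"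
  unfolding pnorm_except_def by (rule Max_ge) auto

lemma pnorm_except_le:
  "0 \<le> M \<Longrightarrow> (\<And>i. i < n \<Longrightarrow> i \<noteq> k \<Longrightarrow> t i * v (y i) \<le> M) \<Longrightarrow> pnorm_except k y \<le> M"
  unfolding pnorm_except_def by (subst Max_le_iff) auto

lemma pnorm_except_cong:
  "(\<And>i. i < n \<Longrightarrow> i \<noteq> k \<Longrightarrow> y i = z i) \<Longrightarrow> pnorm_except k y = pnorm_except k z"
  unfolding pnorm_except_def by (intro arg_cong[where f = Max] arg_cong[where f = "insert 0"] image_cong) auto

lemma pnorm_except_attained:
  assumes "0 < pnorm_except k y"
  obtains i where "i < n" "i \<noteq> k" "pnorm_except k y = t i * v (y i)"
proof -
  have "pnorm_except k y \<in> insert 0 ((\<lambda>i. t i * v (y i)) ` ({..<n} - {k}))"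
    unfolding pnorm_except_def by (rule Max_in) auto
  then show ?thesis using assms that by auto
qed

lemma pnorm_eq_pnorm_except:
  "k < n \<Longrightarrow> t k * v (y k) \<le> pnorm_except k y \<Longrightarrow> N y = pnorm_except k y"
  using pnorm_split by (simp add: max_def)

lemma pnorm_add_unitv:
  assumes k: "k < n" and dom: "t k * v (y k) \<le> pnorm_except k y"
  shows "N (vadd y (vsmul l (unitv k))) = max (N y) (t k * v l)"
proof -
  let ?M = "pnorm_except k y"
  have tk: "0 < t k" using t_pos k by simp
  have "pnorm_except k (vadd y (vsmul l (unitv k))) = ?M"
    by (rule pnorm_except_cong) (simp add: vadd_def vsmul_def unitv_def)
  then have "N (vadd y (vsmul l (unitv k))) = max ?M (t k * v (y k + l))"
    using pnorm_split[OF k, of "vadd y (vsmul l (unitv k))"] by (simp add: vadd_def vsmul_def unitv_def)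
  also have "\<dots> = max ?M (t k * v l)"
  proof -
    have "t k * v (y k + l) \<le> max (t k * v (y k)) (t k * v l)"
      using mult_left_mono[OF v_add_le_max[of "y k" l]] tk by (simp add: max_mult_distrib_left)
    moreover have "t k * v l \<le> max (t k * v (y k + l)) (t k * v (y k))"
      using mult_left_mono[OF v_diff_le_max[of "y k + l" "y k"]] tk by (simp add: max_mult_distrib_left)
    moreover have "\<And>a b c M :: real. a \<le> max c b \<Longrightarrow> b \<le> max a c \<Longrightarrow> c \<le> M \<Longrightarrow> max M a = max M b"
      by (auto simp: max_def split: if_splits)
    ultimately show ?thesis using dom by blast
  qed
  finally show ?thesis using pnorm_eq_pnorm_except[OF k dom] by simp
qed

lemma pnorm_vsmul_unitv: assumes "k < n" shows "N (vsmul l (unitv k)) = t k * v l"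
proof -
  have "pnorm_except k (vsmul l (unitv k)) = 0"
    by (intro antisym pnorm_except_le pnorm_except_nonneg) (simp_all add: vsmul_def unitv_def)
  moreover have "0 < t k" using t_pos assms by blast
  then have "0 \<le> t k * v l" by simp
  ultimately show ?thesis
    using pnorm_split[OF assms] by (simp add: vsmul_def unitv_def)
qed

end

section \<open>Decomposable cases\<close>

context E_space
begin

definition unitv_line :: "nat \<Rightarrow> (nat \<Rightarrow> 'a) set" where
  "unitv_line k = {vsmul l (unitv k) | l. l \<in> K}"

definition solved_hyperplane :: "nat \<Rightarrow> (nat \<Rightarrow> 'a) \<Rightarrow> 'a \<Rightarrow> (nat \<Rightarrow> 'a) set" where
  "solved_hyperplane k beta gam =
     {Evec c | c. Kcoeffs c \<and> c k = (\<Sum>i\<in>{..<n}-{k}. beta i * c i) + c n * gam}"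

lemma ksubspace_unitv_line: "ksubspace K (unitv_line k)"
  unfolding ksubspace_def
proof (intro conjI ballI)
  have "vzero = vsmul 0 (unitv k)" by (simp add: vzero_def vsmul_def)
  then show "vzero \<in> unitv_line k" unfolding unitv_line_def by auto
next
  fix y z assume "y \<in> unitv_line k" "z \<in> unitv_line k"
  then obtain a b where "a \<in> K" "y = vsmul a (unitv k)" "b \<in> K" "z = vsmul b (unitv k)"
    unfolding unitv_line_def by blast
  moreover have "vadd (vsmul a (unitv k)) (vsmul b (unitv k)) = vsmul (a + b) (unitv k)"
    by (simp add: vadd_def vsmul_def algebra_simps)
  ultimately show "vadd y z \<in> unitv_line k" unfolding unitv_line_def by auto
next
  fix c y assume "c \<in> K" "y \<in> unitv_line k"
  then obtain a where "a \<in> K" "y = vsmul a (unitv k)" unfolding unitv_line_def by blast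
  moreover have "vsmul c (vsmul a (unitv k)) = vsmul (c * a) (unitv k)"
    by (simp add: vsmul_def mult.assoc)
  ultimately show "vsmul c y \<in> unitv_line k" unfolding unitv_line_def using \<open>c \<in> K\<close> by auto
qed

lemma unitv_line_subset_E: "k < n \<Longrightarrow> unitv_line k \<subseteq> E"
  unfolding unitv_line_def using Evec_in_E[OF Kcoeffs_delta] vsmul_unitv_eq_Evec by auto

lemma unitv_line_nontrivial: "unitv_line k \<noteq> {vzero}"
proof -
  have "vsmul 1 (unitv k) \<in> unitv_line k" unfolding unitv_line_def using K_one by blast
  moreover have "vzero k \<noteq> (1 :: 'a)" by (simp add: vzero_def)
  ultimately show ?thesis by (metis singletonD vsmul_def mult_1 unitv_def)
qed

lemma ksubspace_solved_hyperplane: "ksubspace K (solved_hyperplane k beta gam)"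
  unfolding ksubspace_def
proof (intro conjI ballI)
  show "vzero \<in> solved_hyperplane k beta gam"
    unfolding solved_hyperplane_def vzero_eq_Evec using Kcoeffs_zero by auto
next
  fix y z assume "y \<in> solved_hyperplane k beta gam" "z \<in> solved_hyperplane k beta gam"
  then obtain a b where "Kcoeffs a" "a k = (\<Sum>i\<in>{..<n}-{k}. beta i * a i) + a n * gam" "y = Evec a"
    "Kcoeffs b" "b k = (\<Sum>i\<in>{..<n}-{k}. beta i * b i) + b n * gam" "z = Evec b"
    unfolding solved_hyperplane_def by blast
  then show "vadd y z \<in> solved_hyperplane k beta gam"
    unfolding solved_hyperplane_def
    by (auto simp: Evec_add Kcoeffs_add sum.distrib algebra_simps intro!: exI[of _ "\<lambda>j. a j + b j"])
next
  fix c y assume "c \<in> K" "y \<in> solved_hyperplane k beta gam"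
  then obtain a where "Kcoeffs a" "a k = (\<Sum>i\<in>{..<n}-{k}. beta i * a i) + a n * gam" "y = Evec a"
    unfolding solved_hyperplane_def by blast
  then show "vsmul c y \<in> solved_hyperplane k beta gam"
    unfolding solved_hyperplane_def using \<open>c \<in> K\<close>
    by (auto simp: Evec_smul Kcoeffs_smul sum_distrib_left algebra_simps intro!: exI[of _ "\<lambda>j. c * a j"])
qed

lemma solved_hyperplane_subset_E: "solved_hyperplane k beta gam \<subseteq> E"
  unfolding solved_hyperplane_def using Evec_in_E by blast

lemma solved_hyperplane_nontrivial:
  assumes "k < n" "gam \<in> K" shows "solved_hyperplane k beta gam \<noteq> {vzero}"
proof -
  define c0 where "c0 = (\<lambda>j. if j = k then gam else if j = n then 1 else 0)"
  have "(\<Sum>i\<in>{..<n}-{k}. beta i * c0 i) = 0" by (rule sum.neutral) (simp add: c0_def)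
  then have "Evec c0 \<in> solved_hyperplane k beta gam"
    unfolding solved_hyperplane_def Kcoeffs_def using assms by (auto simp: c0_def)
  moreover have "Evec c0 k \<noteq> 0"
  proof
    assume "Evec c0 k = 0"
    then have "x k = - gam" using assms(1) by (simp add: c0_def add_eq_0_iff)
    then show False using x_notin_K assms K_uminus by auto
  qed
  ultimately show ?thesis unfolding vzero_def by auto
qed

lemma solved_hyperplane_inter_unitv_line:
  assumes "k < n" shows "solved_hyperplane k beta gam \<inter> unitv_line k \<subseteq> {vzero}"
proof
  fix y assume "y \<in> solved_hyperplane k beta gam \<inter> unitv_line k"
  then obtain c l where c: "Kcoeffs c" "c k = (\<Sum>i\<in>{..<n}-{k}. beta i * c i) + c n * gam"
    "y = Evec c" and l: "l \<in> K" "y = vsmul l (unitv k)"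
    unfolding solved_hyperplane_def unitv_line_def by blast
  have "Evec c = Evec (\<lambda>j. if j = k then l else 0)"
    using c(3) l(2) vsmul_unitv_eq_Evec[OF assms] by simp
  then have "c j = (if j = k then l else 0)" if "j \<le> n" for j
    using Evec_inj[OF c(1) Kcoeffs_delta[OF l(1)] _ that] by blast
  then have "l = 0" using c(2) assms by (simp add: sum.neutral)
  then show "y \<in> {vzero}" using l by (simp add: vsmul_def vzero_def fun_eq_iff)
qed

lemma solved_hyperplane_plus_unitv_line:
  assumes k: "k < n" and beta: "\<forall>i<n. beta i \<in> K" and gam: "gam \<in> K" and "y \<in> E"
  shows "\<exists>d1\<in>solved_hyperplane k beta gam. \<exists>d2\<in>unitv_line k. y = vadd d1 d2"
proof -
  define lin where "lin c = (\<Sum>i\<in>{..<n}-{k}. beta i * c i) + c n * gam" for c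
  obtain c where c: "Kcoeffs c" "y = Evec c" using \<open>y \<in> E\<close> by (rule EspaceE)
  have lin_K: "lin c \<in> K"
    unfolding lin_def using c(1) beta gam unfolding Kcoeffs_def by (intro K_add K_sum K_mult) auto
  have "lin (c(k := lin c)) = lin c"
    unfolding lin_def using k by (intro arg_cong2[where f = "(+)"] sum.cong) auto
  then have "Evec (c(k := lin c)) \<in> solved_hyperplane k beta gam"
    unfolding solved_hyperplane_def lin_def[symmetric] using c(1) lin_K
    unfolding Kcoeffs_def by auto
  moreover have "c k - lin c \<in> K" using c(1) lin_K k unfolding Kcoeffs_def by auto
  then have "vsmul (c k - lin c) (unitv k) \<in> unitv_line k" unfolding unitv_line_def by blast
  moreover have "y = vadd (Evec (c(k := lin c))) (vsmul (c k - lin c) (unitv k))"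
    unfolding c(2) vsmul_unitv_eq_Evec[OF k] Evec_add by (rule Evec_cong) auto
  ultimately show ?thesis by blast
qed

text \<open>A hyperplane of \<open>E\<close> on which the \<open>k\<close>-th coordinate never dominates the norm is an
  orthogonal complement of \<open>K f_k\<close>.\<close>
lemma decomposable_if_dominated_hyperplane:
  assumes k: "k < n" and beta: "\<forall>i<n. beta i \<in> K" and gam: "gam \<in> K"
    and dom: "\<And>c. Kcoeffs c \<and> c k = (\<Sum>i\<in>{..<n}-{k}. beta i * c i) + c n * gam \<Longrightarrow>
      t k * v (Evec c k) \<le> pnorm_except k (Evec c)"
  shows "decomposable K N E"
proof (rule decomposableI[OF ksubspace_solved_hyperplane ksubspace_unitv_line
      solved_hyperplane_subset_E unitv_line_subset_E[OF k] solved_hyperplane_nontrivial[OF k gam]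
      unitv_line_nontrivial solved_hyperplane_inter_unitv_line[OF k]
      solved_hyperplane_plus_unitv_line[OF k beta gam]])
  fix d1 d2 assume "d1 \<in> solved_hyperplane k beta gam" "d2 \<in> unitv_line k"
  then obtain c l where "Kcoeffs c \<and> c k = (\<Sum>i\<in>{..<n}-{k}. beta i * c i) + c n * gam"
    "d1 = Evec c" "d2 = vsmul l (unitv k)"
    unfolding solved_hyperplane_def unitv_line_def by blast
  then show "N (vadd d1 d2) = max (N d1) (N d2)"
    using pnorm_add_unitv[OF k dom] pnorm_vsmul_unitv[OF k] by simp
qed

lemma decomposable_if_unbalanced:
  assumes ij: "i < n" "j < n" and less: "r i * t i < r j * t j"
  shows "decomposable K N E"
proof -
  have ti: "0 < t i" and tj: "0 < t j" using t_pos ij by auto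
  have "r i < r j * t j / t i" using less ti by (simp add: field_simps)
  then obtain e where e: "e \<in> K" "v (x i - e) < r j * t j / t i" using distK_less_imp by blast
  have te: "t i * v (x i - e) \<le> r j * t j" using e(2) ti by (simp add: field_simps)
  have "j \<noteq> i" using less by auto
  show ?thesis
  proof (rule decomposable_if_dominated_hyperplane[of i "\<lambda>_. 0" "- e"])
    fix c assume "Kcoeffs c \<and> c i = (\<Sum>l\<in>{..<n} - {i}. 0 * c l) + c n * - e"
    then have c: "Kcoeffs c" "c i = - (c n * e)" by simp_all
    have "Evec c i = c n * (x i - e)" using ij c(2) by (simp add: algebra_simps)
    then have "t i * v (Evec c i) = v (c n) * (t i * v (x i - e))" by simp
    also have "\<dots> \<le> v (c n) * (r j * t j)" using te by (simp add: mult_left_mono)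
    also have "\<dots> = t j * (v (c n) * r j)" by (simp add: ac_simps)
    also have "\<dots> \<le> t j * v (Evec c j)" using v_last_coeff_le[OF c(1) ij(2)] tj by simp
    also have "\<dots> \<le> pnorm_except i (Evec c)" using pnorm_except_ge[OF ij(2) \<open>j \<noteq> i\<close>] .
    finally show "t i * v (Evec c i) \<le> pnorm_except i (Evec c)" .
  qed (use ij e in \<open>simp_all add: K_uminus\<close>)
qed

lemma orth_mod_if_n_eq_1: assumes "n = 1" shows "orth_mod K v n x"
  unfolding orth_mod_def using x_notin_K assms by (simp add: distK_mult_K lessThan_Suc)

lemma non_orth_witness:
  assumes "\<not> orth_mod K v n x"
  obtains lam k where "\<forall>i<n. lam i \<in> K" "k < n" "lam k \<noteq> 0"
    "\<forall>i<n. v (lam i) * r i \<le> v (lam k) * r k"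
    "dK (\<Sum>i<n. lam i * x i) < v (lam k) * r k"
proof -
  obtain lam where lam: "\<forall>i<n. lam i \<in> K"
    and ne: "dK (\<Sum>i<n. lam i * x i) \<noteq> Max ((\<lambda>i. v (lam i) * r i) ` {..<n})"
    using assms x_notin_K unfolding orth_mod_def by blast
  let ?R = "Max ((\<lambda>i. v (lam i) * r i) ` {..<n})"
  have "?R \<in> (\<lambda>i. v (lam i) * r i) ` {..<n}"
    using n_pos by (intro Max_in) (auto simp: lessThan_empty_iff)
  then obtain k where k: "k < n" "?R = v (lam k) * r k" by auto
  have R_ge: "v (lam i) * r i \<le> ?R" if "i < n" for i
    using that by (intro Max_ge) auto
  have "0 \<le> ?R" using R_ge[OF k(1)] distK_nonneg[of "x k"] by (smt (verit) mult_nonneg_nonneg v_nonneg)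
  then have "dK (\<Sum>i<n. lam i * x i) \<le> ?R"
    using lam R_ge by (intro distK_sum_le) (auto simp: distK_mult_K)
  then have less: "dK (\<Sum>i<n. lam i * x i) < v (lam k) * r k" using ne k(2) by simp
  then have "lam k \<noteq> 0" using distK_nonneg by (metis mult_zero_left not_less v_zero)
  then show ?thesis using that lam k less R_ge by auto
qed

lemma non_orth_coordinate_eq:
  assumes "k < n" "lam k * c k = - (\<Sum>i\<in>{..<n}-{k}. lam i * c i) - c n * e"
  shows "lam k * Evec c k
    = - (\<Sum>i\<in>{..<n}-{k}. lam i * Evec c i) + c n * ((\<Sum>i<n. lam i * x i) - e)"
proof -
  have S_eq: "(\<Sum>i\<in>{..<n}-{k}. lam i * Evec c i)
      = (\<Sum>i\<in>{..<n}-{k}. lam i * c i) + c n * (\<Sum>i\<in>{..<n}-{k}. lam i * x i)"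
    by (simp add: sum.distrib sum_distrib_left algebra_simps)
  have w_eq: "(\<Sum>i<n. lam i * x i) = lam k * x k + (\<Sum>i\<in>{..<n}-{k}. lam i * x i)"
    using assms(1) by (simp add: sum.remove)
  have "lam k * Evec c k = lam k * c k + c n * (lam k * x k)"
    using assms(1) by (simp add: algebra_simps)
  also have "\<dots> = - (\<Sum>i\<in>{..<n}-{k}. lam i * Evec c i) + c n * ((\<Sum>i<n. lam i * x i) - e)"
    unfolding assms(2) S_eq w_eq by (simp add: algebra_simps)
  finally show ?thesis .
qed

text \<open>Both summands in \<open>non_orth_coordinate_eq\<close> are small: the first because \<open>lam k\<close> has
  maximal weight, the second because \<open>e\<close> approximates \<open>\<Sum>lam i x i\<close> better than
  \<open>v (lam k) * r k\<close>.\<close>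
lemma non_orth_hyperplane_dominated:
  assumes T: "\<forall>i<n. r i * t i = T"
    and k: "k < n" "lam k \<noteq> 0" and j: "j < n" "j \<noteq> k"
    and lam_max: "\<forall>i<n. v (lam i) * r i \<le> v (lam k) * r k"
    and e: "v ((\<Sum>i<n. lam i * x i) - e) < v (lam k) * r k"
    and c: "Kcoeffs c" "lam k * c k = - (\<Sum>i\<in>{..<n}-{k}. lam i * c i) - c n * e"
  shows "t k * v (Evec c k) \<le> pnorm_except k (Evec c)"
proof -
  define R where "R = v (lam k) * r k"
  define M where "M = pnorm_except k (Evec c)"
  define S where "S = (\<Sum>i\<in>{..<n}-{k}. lam i * Evec c i)"
  have R_pos: "0 < R" using k r_pos by (simp add: R_def v_pos_iff)
  have T_pos: "0 < T" using T j r_pos t_pos by (metis mult_pos_pos)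
  have M_nonneg: "0 \<le> M" unfolding M_def by (rule pnorm_except_nonneg)
  have ident: "lam k * Evec c k = - S + c n * ((\<Sum>i<n. lam i * x i) - e)"
    unfolding S_def by (rule non_orth_coordinate_eq[OF k(1) c(2)])
  have "T * v (lam i * Evec c i) \<le> R * M" if "i \<in> {..<n} - {k}" for i
  proof -
    have i: "i < n" "i \<noteq> k" "0 < t i" using that t_pos by auto
    have "T * v (lam i) = t i * (v (lam i) * r i)" using T i by (simp add: algebra_simps)
    also have "\<dots> \<le> t i * R" using lam_max i by (simp add: R_def)
    finally have "T * v (lam i) * v (Evec c i) \<le> t i * R * v (Evec c i)"
      by (rule mult_right_mono) simp
    also have "\<dots> = R * (t i * v (Evec c i))" by simp
    also have "\<dots> \<le> R * M"
      using pnorm_except_ge[OF i(1,2)] R_pos by (simp add: M_def)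
    finally show ?thesis by (simp add: mult.assoc)
  qed
  then have S_small: "v S \<le> R * M / T"
    unfolding S_def using T_pos R_pos M_nonneg by (intro v_sum_le) (auto simp: field_simps)
  have "T * v (c n) = t j * (v (c n) * r j)" using T j by (simp add: algebra_simps)
  also have "\<dots> \<le> t j * v (Evec c j)" using v_last_coeff_le[OF c(1) j(1)] t_pos j by simp
  also have "\<dots> \<le> M" using pnorm_except_ge[OF j] by (simp add: M_def)
  finally have "T * v (c n) * v ((\<Sum>i<n. lam i * x i) - e) \<le> M * R"
    using e R_pos M_nonneg by (intro mult_mono) (auto simp: R_def)
  then have last_small: "v (c n * ((\<Sum>i<n. lam i * x i) - e)) \<le> R * M / T"
    using T_pos by (simp only: v_mult pos_le_divide_eq) (simp add: ac_simps)
  have "v (lam k * Evec c k) \<le> R * M / T"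
    using v_add_le_max[of "- S" "c n * ((\<Sum>i<n. lam i * x i) - e)"] S_small last_small
    unfolding ident by simp
  then have "T * v (lam k) * v (Evec c k) \<le> R * M"
    using T_pos by (simp add: pos_le_divide_eq ac_simps)
  moreover have "T * v (lam k) = R * t k" using T k by (simp add: R_def algebra_simps)
  ultimately have "R * (t k * v (Evec c k)) \<le> R * M" by (simp add: ac_simps)
  then show ?thesis using R_pos by (simp add: M_def)
qed

lemma decomposable_if_not_orth:
  assumes T: "\<forall>i<n. r i * t i = T" and not_orth: "\<not> orth_mod K v n x"
  shows "decomposable K N E"
proof -
  obtain lam k where lam: "\<forall>i<n. lam i \<in> K" and k: "k < n" "lam k \<noteq> 0"
    and lam_max: "\<forall>i<n. v (lam i) * r i \<le> v (lam k) * r k"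
    and less: "dK (\<Sum>i<n. lam i * x i) < v (lam k) * r k"
    using non_orth_witness[OF not_orth] by blast
  obtain e where e: "e \<in> K" "v ((\<Sum>i<n. lam i * x i) - e) < v (lam k) * r k"
    using distK_less_imp[OF less] by blast
  have "n \<noteq> 1" using orth_mod_if_n_eq_1 not_orth by blast
  define j where "j = (if k = 0 then 1 else (0::nat))"
  have j: "j < n" "j \<noteq> k" using \<open>n \<noteq> 1\<close> n_pos k(1) by (auto simp: j_def)
  have lam_k: "lam k \<in> K" using lam k by simp
  show ?thesis
  proof (rule decomposable_if_dominated_hyperplane[of k "\<lambda>i. - lam i / lam k" "- e / lam k"])
    fix c assume "Kcoeffs c \<and> c k = (\<Sum>i\<in>{..<n} - {k}. - lam i / lam k * c i) + c n * (- e / lam k)"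
    then have c: "Kcoeffs c"
      and c_k: "c k = (\<Sum>i\<in>{..<n} - {k}. - lam i / lam k * c i) + c n * (- e / lam k)"
      by simp_all
    have "lam k * (\<Sum>i\<in>{..<n} - {k}. - lam i / lam k * c i) = - (\<Sum>i\<in>{..<n} - {k}. lam i * c i)"
      unfolding sum_distrib_left sum_negf[symmetric] by (rule sum.cong) (use k(2) in auto)
    moreover have "lam k * (c n * (- e / lam k)) = - (c n * e)" using k(2) by simp
    ultimately have "lam k * c k = - (\<Sum>i\<in>{..<n}-{k}. lam i * c i) - c n * e"
      unfolding c_k distrib_left by simp
    then show "t k * v (Evec c k) \<le> pnorm_except k (Evec c)"
      by (rule non_orth_hyperplane_dominated[OF T k j lam_max e(2) c])
  qed (use k lam lam_k e in auto)
qed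

theorem balanced_orth_if_indecomposable:
  assumes "indecomposable K N E"
  shows "(\<forall>i<n. \<forall>j<n. r i * t i = r j * t j) \<and> orth_mod K v n x"
proof
  show balanced: "\<forall>i<n. \<forall>j<n. r i * t i = r j * t j"
  proof (intro allI impI)
    fix i j assume ij: "i < n" "j < n"
    have "\<not> decomposable K N E" using assms unfolding indecomposable_def .
    then show "r i * t i = r j * t j"
      using decomposable_if_unbalanced[OF ij] decomposable_if_unbalanced[OF ij(2,1)]
      by (cases rule: linorder_cases[of "r i * t i" "r j * t j"]) auto
  qed
  show "orth_mod K v n x"
  proof (rule ccontr)
    assume "\<not> orth_mod K v n x"
    moreover have "0 < n" using n_pos by simp
    then have "\<forall>i<n. r i * t i = r 0 * t 0" using balanced by blast
    ultimately show False
      using decomposable_if_not_orth assms unfolding indecomposable_def by blast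
  qed
qed

end

section \<open>Functionals on \<open>E\<close>\<close>

context E_space
begin

lemma klin_functionalD:
  assumes "klin_functional K E phi"
  shows "y \<in> E \<Longrightarrow> phi y \<in> K"
    and "y \<in> E \<Longrightarrow> z \<in> E \<Longrightarrow> phi (vadd y z) = phi y + phi z"
    and "c \<in> K \<Longrightarrow> y \<in> E \<Longrightarrow> phi (vsmul c y) = c * phi y"
  using assms unfolding klin_functional_def by auto

lemma klin_functional_diff:
  assumes "klin_functional K E phi" "klin_functional K E psi" "b \<in> K"
  shows "klin_functional K E (\<lambda>y. phi y - b * psi y)"
  using klin_functionalD[OF assms(1)] klin_functionalD[OF assms(2)] assms(3)
  unfolding klin_functional_def by (auto simp: algebra_simps intro!: K_diff K_mult)

lemma functional_Evec:
  assumes phi: "klin_functional K E phi" and c: "Kcoeffs c"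
  shows "phi (Evec c) = (\<Sum>i<n. c i * phi (unitv i)) + c n * phi (xvec n x)"
proof -
  define p where "p m = Evec (\<lambda>j. if j < m then c j else if j = n then c n else 0)" for m
  have p_in_E: "p m \<in> E" for m
    unfolding p_def using c by (intro Evec_in_E) (auto simp: Kcoeffs_def)
  have partial: "phi (p m) = (\<Sum>i<m. c i * phi (unitv i)) + c n * phi (xvec n x)" if "m \<le> n" for m
    using that
  proof (induction m)
    case 0
    have "p 0 = vsmul (c n) (xvec n x)"
      unfolding p_def xvec_eq_Evec Evec_smul by (rule Evec_cong) auto
    then show ?case using klin_functionalD(3)[OF phi _ xvec_in_E] c by (simp add: Kcoeffs_def)
  next
    case (Suc m)
    then have m: "m < n" by simp
    have "p (Suc m) = vadd (p m) (vsmul (c m) (unitv m))"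
      unfolding p_def unitv_eq_Evec[OF m] Evec_smul Evec_add
      by (rule Evec_cong) (use m in \<open>auto simp: less_Suc_eq\<close>)
    moreover have "c m \<in> K" using c m by (simp add: Kcoeffs_def)
    ultimately have "phi (p (Suc m)) = phi (p m) + c m * phi (unitv m)"
      using klin_functionalD[OF phi] p_in_E unitv_in_E[OF m] E_vsmul by simp
    then show ?case using Suc by simp
  qed
  moreover have "p n = Evec c" unfolding p_def by (rule Evec_cong) auto
  ultimately show ?thesis using partial[of n] by simp
qed

text \<open>The image of \<open>phi \<in> E'\<close> under the linear map \<open>E' \<rightarrow> [1, x_1, ..., x_n]\<close> of the theorem,
  which sends the dual basis vector \<open>e_i\<close> to \<open>- x_i\<close> and \<open>e_{n+1}\<close> to \<open>1\<close>.\<close>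
definition dual_image :: "((nat \<Rightarrow> 'a) \<Rightarrow> 'a) \<Rightarrow> 'a" where
  "dual_image phi = (\<Sum>i<n. phi (unitv i) * (- x i)) + phi (xvec n x) * 1"

lemma dual_image_eq: "dual_image phi = phi (xvec n x) - (\<Sum>i<n. phi (unitv i) * x i)"
  unfolding dual_image_def by (simp add: sum_negf)

lemma functional_Evec_eq:
  assumes "klin_functional K E phi" "Kcoeffs c"
  shows "phi (Evec c) = (\<Sum>i<n. phi (unitv i) * Evec c i) + c n * dual_image phi"
proof -
  have "(\<Sum>i<n. phi (unitv i) * Evec c i)
      = (\<Sum>i<n. c i * phi (unitv i)) + c n * (\<Sum>i<n. phi (unitv i) * x i)"
    by (simp add: sum.distrib sum_distrib_left algebra_simps)
  then show ?thesis
    unfolding functional_Evec[OF assms] dual_image_def by (simp add: sum_negf algebra_simps)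
qed

lemma dual_image_diff:
  "dual_image (\<lambda>y. phi y - b * psi y) = dual_image phi - b * dual_image psi"
proof -
  have "(\<Sum>i<n. (phi (unitv i) - b * psi (unitv i)) * - x i)
      = (\<Sum>i<n. phi (unitv i) * - x i) - b * (\<Sum>i<n. psi (unitv i) * - x i)"
    unfolding sum_distrib_left sum_subtractf[symmetric] by (rule sum.cong) (auto simp: algebra_simps)
  then show ?thesis unfolding dual_image_def by (simp add: algebra_simps)
qed

lemma dual_image_in_span:
  assumes phi: "klin_functional K E phi"
  shows "dual_image phi \<in> kspan1 K (1 # map x [0..<n])"
proof -
  define c where "c j = (if j = 0 then phi (xvec n x) else - phi (unitv (j - 1)))" for j
  have "\<forall>j<length (1 # map x [0..<n]). c j \<in> K"
    unfolding c_def using klin_functionalD(1)[OF phi] xvec_in_E unitv_in_E by auto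
  moreover have "(\<Sum>j<length (1 # map x [0..<n]). c j * (1 # map x [0..<n]) ! j) = dual_image phi"
    unfolding dual_image_def
    by (simp add: sum.lessThan_Suc_shift c_def add.commute del: sum.lessThan_Suc)
  ultimately show ?thesis unfolding kspan1_def mem_Collect_eq by (intro exI[of _ c]) simp
qed

definition ratios :: "((nat \<Rightarrow> 'a) \<Rightarrow> 'a) \<Rightarrow> real set" where
  "ratios phi = (\<lambda>y. v (phi y) / N y) ` (E - {vzero})"

lemma opnorm_eq_Sup_ratios: "opnorm v N E phi = Sup (ratios phi)"
  unfolding opnorm_def ratios_def ..

lemma ratios_nonempty: "ratios phi \<noteq> {}"
proof -
  have "unitv 0 \<noteq> (vzero :: nat \<Rightarrow> 'a)" unfolding unitv_def vzero_def by (metis one_neq_zero)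
  then show ?thesis unfolding ratios_def using unitv_in_E[of 0] n_pos by auto
qed

lemma ratios_nonneg: "z \<in> ratios phi \<Longrightarrow> 0 \<le> z"
  unfolding ratios_def using pnorm_nonneg by auto

end

lemma exists_factor_gt_one:
  fixes a b :: real assumes "a < b" "0 < b" shows "\<exists>rho>1. rho * a < b"
proof (cases "a \<le> 0")
  case True
  then show ?thesis using assms by (intro exI[of _ 2]) auto
next
  case False
  then show ?thesis using assms by (intro exI[of _ "(1 + b / a) / 2"]) (auto simp: field_simps)
qed

locale balanced_E_space = E_space +
  fixes s :: real
  assumes balanced: "\<forall>i<n. r i * t i = s" and orth: "orth_mod K v n x"
begin

lemma s_pos: "0 < s"
  using balanced n_pos r_pos t_pos by (metis less_le_trans mult_pos_pos zero_less_one)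

lemma distK_comb:
  assumes "\<forall>i<n. lam i \<in> K" "b \<in> K"
  shows "dK (b - (\<Sum>i<n. lam i * x i)) = Max ((\<lambda>i. v (lam i) * r i) ` {..<n})"
proof -
  have "\<forall>lam. (\<forall>i<n. lam i \<in> K) \<longrightarrow> dK (\<Sum>i<n. lam i * x i) = Max ((\<lambda>i. v (lam i) * r i) ` {..<n})"
    using orth unfolding orth_mod_def by blast
  from this[rule_format, of "\<lambda>i. - lam i"]
  have "dK (\<Sum>i<n. - lam i * x i) = Max ((\<lambda>i. v (lam i) * r i) ` {..<n})"
    using assms(1) by (simp add: K_uminus)
  moreover have "b - (\<Sum>i<n. lam i * x i) = b + (\<Sum>i<n. - lam i * x i)"
    by (simp add: sum_negf)
  ultimately show ?thesis using distK_add_K[OF assms(2)] by metis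
qed

lemma distK_dual_image:
  assumes phi: "klin_functional K E phi"
  shows "dK (dual_image phi) = Max ((\<lambda>i. v (phi (unitv i)) * r i) ` {..<n})"
  unfolding dual_image_eq using klin_functionalD(1)[OF phi] unitv_in_E xvec_in_E
  by (intro distK_comb) auto

lemma coeff_dist_le_v_dual_image:
  assumes phi: "klin_functional K E phi" and "i < n"
  shows "v (phi (unitv i)) * r i \<le> v (dual_image phi)"
proof -
  have "v (phi (unitv i)) * r i \<le> dK (dual_image phi)"
    unfolding distK_dual_image[OF phi] using assms(2) by (intro Max_ge) auto
  also have "\<dots> \<le> v (dual_image phi)" using distK_le[of 0] by simp
  finally show ?thesis .
qed

lemma coeff_dist_less_v_dual_image:
  assumes phi: "klin_functional K E phi" and W: "dual_image phi \<noteq> 0" and "i < n"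
  shows "v (phi (unitv i)) * r i < v (dual_image phi)"
proof (cases "dual_image phi \<in> K")
  case True
  then have "Max ((\<lambda>i. v (phi (unitv i)) * r i) ` {..<n}) = 0"
    using distK_dual_image[OF phi] distK_of_K by simp
  moreover have "v (phi (unitv i)) * r i \<le> Max ((\<lambda>i. v (phi (unitv i)) * r i) ` {..<n})"
    using assms(3) by (intro Max_ge) auto
  moreover have "0 < v (dual_image phi)" using W by (simp add: v_pos_iff)
  ultimately show ?thesis by linarith
next
  case False
  have "v (phi (unitv i)) * r i \<le> dK (dual_image phi)"
    unfolding distK_dual_image[OF phi] using assms(3) by (intro Max_ge) auto
  also have "\<dots> < v (dual_image phi)" using distK_less_v[OF False, of 0] by simp
  finally show ?thesis .
qed

lemma functional_bound:
  assumes phi: "klin_functional K E phi" and y: "y \<in> E"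
  shows "s * v (phi y) \<le> v (dual_image phi) * N y"
proof -
  obtain c where c: "Kcoeffs c" "y = Evec c" using y by (rule EspaceE)
  define B where "B = v (dual_image phi) * N y / s"
  have B_nonneg: "0 \<le> B" unfolding B_def using s_pos pnorm_nonneg by simp
  have "v (phi (unitv i) * Evec c i) \<le> B" if "i < n" for i
  proof -
    have "s = r i * t i" using balanced that by simp
    then have "s * v (phi (unitv i) * Evec c i) = (v (phi (unitv i)) * r i) * (t i * v (Evec c i))"
      by (simp only: v_mult ac_simps)
    also have "\<dots> \<le> v (dual_image phi) * N y"
      using coeff_dist_le_v_dual_image[OF phi that] pnorm_ge[OF that, of y] c(2) t_pos that
      by (intro mult_mono) (auto intro: mult_nonneg_nonneg)
    finally show ?thesis unfolding B_def using s_pos by (simp add: field_simps)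
  qed
  then have sum_le: "v (\<Sum>i<n. phi (unitv i) * Evec c i) \<le> B"
    using B_nonneg by (intro v_sum_le) auto
  have "s * v (c n) = t 0 * (v (c n) * r 0)" using balanced n_pos by (simp add: algebra_simps)
  also have "\<dots> \<le> t 0 * v (Evec c 0)" using v_last_coeff_le[OF c(1)] t_pos n_pos by simp
  also have "\<dots> \<le> N y" using pnorm_ge[of 0 y] n_pos c(2) by simp
  finally have "s * v (c n) * v (dual_image phi) \<le> N y * v (dual_image phi)"
    by (rule mult_right_mono) simp
  then have last_le: "v (c n * dual_image phi) \<le> B"
    unfolding B_def using s_pos by (simp add: field_simps)
  have "v (phi y) \<le> B"
    using v_add_le_max[of "\<Sum>i<n. phi (unitv i) * Evec c i" "c n * dual_image phi"] sum_le last_le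
    unfolding c(2) functional_Evec_eq[OF phi c(1)] by simp
  then show ?thesis unfolding B_def using s_pos by (simp add: field_simps)
qed

lemma exists_close_vector:
  assumes "1 < rho"
  shows "\<exists>c. Kcoeffs c \<and> c n = 1 \<and> (\<forall>i<n. v (Evec c i) < rho * r i)"
proof -
  have "\<exists>e\<in>K. v (x i - e) < rho * r i" if "i < n" for i
    using distK_less_imp r_pos[OF that] assms by simp
  then obtain e where e: "\<And>i. i < n \<Longrightarrow> e i \<in> K \<and> v (x i - e i) < rho * r i" by metis
  define c where "c j = (if j = n then 1 else - e j)" for j
  have "Kcoeffs c" unfolding Kcoeffs_def c_def using e by auto
  moreover have "c n = 1" by (simp add: c_def)
  moreover have "v (Evec c i) < rho * r i" if "i < n" for i using e[OF that] that by (simp add: c_def)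
  ultimately show ?thesis by blast
qed

text \<open>On a vector whose coordinates \<open>x_i - e_i\<close> approximate the distances \<open>r_i\<close>, the
  functional \<open>phi\<close> takes a value of size \<open>v (dual_image phi)\<close>.\<close>
lemma functional_nearly_attains:
  assumes phi: "klin_functional K E phi" and W: "dual_image phi \<noteq> 0"
    and rho: "1 < rho" "\<forall>i<n. rho * (v (phi (unitv i)) * r i) < v (dual_image phi)"
  obtains y where "y \<in> E" "y \<noteq> vzero" "v (phi y) = v (dual_image phi)" "N y < rho * s"
proof -
  obtain c where c: "Kcoeffs c" "c n = 1" and close: "\<And>i. i < n \<Longrightarrow> v (Evec c i) < rho * r i"
    using exists_close_vector[OF rho(1)] by blast
  have "Evec c \<noteq> vzero" using Evec_eq_vzero_iff[OF c(1)] c(2) by auto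
  moreover have "N (Evec c) < rho * s"
  proof (rule pnorm_less)
    fix i assume i: "i < n"
    have "t i * v (Evec c i) < t i * (rho * r i)" using close[OF i] t_pos i by simp
    also have "\<dots> = rho * s" using balanced i by (simp add: algebra_simps)
    finally show "t i * v (Evec c i) < rho * s" .
  qed
  moreover have "v (\<Sum>i<n. phi (unitv i) * Evec c i) < v (dual_image phi)"
  proof (rule v_sum_less)
    fix i assume "i \<in> {..<n}"
    then have i: "i < n" by simp
    have "v (phi (unitv i) * Evec c i) \<le> v (phi (unitv i)) * (rho * r i)"
      using close[OF i] by (simp add: mult_left_mono less_imp_le)
    also have "\<dots> < v (dual_image phi)" using rho(2) i by (simp add: algebra_simps)
    finally show "v (phi (unitv i) * Evec c i) < v (dual_image phi)" .
  qed (use W in \<open>auto simp: v_pos_iff\<close>)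
  then have "v (dual_image phi + (\<Sum>i<n. phi (unitv i) * Evec c i)) = v (dual_image phi)"
    by (rule v_add_eq_left)
  then have "v (phi (Evec c)) = v (dual_image phi)"
    unfolding functional_Evec_eq[OF phi c(1)] c(2) by (simp add: add.commute)
  ultimately show ?thesis using that Evec_in_E[OF c(1)] by blast
qed

lemma ratio_le_dual_image:
  assumes phi: "klin_functional K E phi" and z: "z \<in> ratios phi"
  shows "z \<le> v (dual_image phi) / s"
proof -
  obtain y where y: "y \<in> E" "y \<noteq> vzero" "z = v (phi y) / N y"
    using z unfolding ratios_def by blast
  have "s * z * N y = s * v (phi y)" using y(3) pnorm_pos[OF y(1,2)] by simp
  also have "\<dots> \<le> v (dual_image phi) * N y" by (rule functional_bound[OF phi y(1)])
  finally have "s * z \<le> v (dual_image phi)" using pnorm_pos[OF y(1,2)] by simp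
  then show ?thesis using s_pos by (simp add: field_simps)
qed

lemma dual_image_le_ratio_bound:
  assumes phi: "klin_functional K E phi" and U: "\<And>z. z \<in> ratios phi \<Longrightarrow> z \<le> U"
  shows "v (dual_image phi) / s \<le> U"
proof (rule ccontr)
  obtain z where "z \<in> ratios phi" using ratios_nonempty by blast
  then have U_nonneg: "0 \<le> U" using U ratios_nonneg by (meson order_trans)
  assume "\<not> ?thesis"
  then have sU: "s * U < v (dual_image phi)" using s_pos by (simp add: field_simps)
  then have W: "dual_image phi \<noteq> 0" using U_nonneg s_pos by (auto simp: mult_nonneg_nonneg leD)
  let ?R = "Max ((\<lambda>i. v (phi (unitv i)) * r i) ` {..<n})"
  have "?R < v (dual_image phi)"
    using coeff_dist_less_v_dual_image[OF phi W] n_pos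
    by (subst Max_less_iff) (auto simp: lessThan_empty_iff)
  then have "max (s * U) ?R < v (dual_image phi)" using sU by simp
  moreover have vW: "0 < v (dual_image phi)" using W by (simp add: v_pos_iff)
  ultimately obtain rho where rho: "1 < rho" "rho * max (s * U) ?R < v (dual_image phi)"
    using exists_factor_gt_one by blast
  have rho_max: "rho * a \<le> rho * max (s * U) ?R" if "a \<le> max (s * U) ?R" for a
    using that rho(1) by (intro mult_left_mono) auto
  have "rho * (v (phi (unitv i)) * r i) < v (dual_image phi)" if "i < n" for i
    using rho_max[of "v (phi (unitv i)) * r i"] rho(2) that by (simp add: le_max_iff_disj)
  then obtain y where y: "y \<in> E" "y \<noteq> vzero" "v (phi y) = v (dual_image phi)" "N y < rho * s"
    using functional_nearly_attains[OF phi W rho(1)] by blast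
  have "v (phi y) / N y \<le> U" using U y(1,2) unfolding ratios_def by blast
  then have "v (dual_image phi) \<le> U * N y" using y(3) pnorm_pos[OF y(1,2)] by (simp add: field_simps)
  also have "\<dots> \<le> U * (rho * s)" using U_nonneg y(4) by (simp add: mult_left_mono)
  also have "\<dots> = rho * (s * U)" by (simp add: ac_simps)
  also have "\<dots> < v (dual_image phi)" using rho_max[of "s * U"] rho(2) by simp
  finally show False by simp
qed

theorem opnorm_eq_dual_image:
  assumes phi: "klin_functional K E phi"
  shows "opnorm v N E phi = v (dual_image phi) / s"
  unfolding opnorm_eq_Sup_ratios using ratios_nonempty ratio_le_dual_image[OF phi]
    dual_image_le_ratio_bound[OF phi] by (intro cSup_eq_non_empty) auto

lemma dual_image_nonzero:
  assumes "klin_functional K E phi" "y \<in> E" "phi y \<noteq> 0"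
  shows "dual_image phi \<noteq> 0"
proof
  assume "dual_image phi = 0"
  then have "s * v (phi y) \<le> 0" using functional_bound[OF assms(1,2)] by simp
  moreover have "0 < s * v (phi y)" using s_pos assms(3) by (simp add: v_pos_iff)
  ultimately show False by linarith
qed

lemma v_dual_image_le:
  assumes phi: "klin_functional K E phi" and bound: "\<And>y. y \<in> E \<Longrightarrow> s * v (phi y) \<le> C * N y"
  shows "v (dual_image phi) \<le> C"
proof -
  have "v (dual_image phi) / s \<le> C / s"
  proof (rule dual_image_le_ratio_bound[OF phi])
    fix z assume "z \<in> ratios phi"
    then obtain y where y: "y \<in> E" "y \<noteq> vzero" "z = v (phi y) / N y" unfolding ratios_def by blast
    have "s * z * N y \<le> C * N y" using y(3) bound[OF y(1)] pnorm_pos[OF y(1,2)] by simp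
    then have "s * z \<le> C" using pnorm_pos[OF y(1,2)] by simp
    then show "z \<le> C / s" using s_pos by (simp add: field_simps)
  qed
  then show ?thesis using s_pos by (simp add: divide_le_cancel)
qed

end

section \<open>Indecomposability\<close>

context E_space
begin

definition Ecoord :: "nat \<Rightarrow> (nat \<Rightarrow> 'a) \<Rightarrow> 'a" where
  "Ecoord j y = (SOME c. Kcoeffs c \<and> y = Evec c) j"

lemma Ecoord_Evec: assumes "Kcoeffs c" "j \<le> n" shows "Ecoord j (Evec c) = c j"
proof -
  define c' where "c' = (SOME c'. Kcoeffs c' \<and> Evec c = Evec c')"
  have "Kcoeffs c' \<and> Evec c = Evec c'" unfolding c'_def by (rule someI[of _ c]) (use assms in simp)
  then show ?thesis using Evec_inj[OF assms(1)] assms(2) unfolding Ecoord_def c'_def[symmetric] by metis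
qed

lemma klin_functional_Ecoord: assumes "j \<le> n" shows "klin_functional K E (Ecoord j)"
  unfolding klin_functional_def
proof (intro conjI ballI)
  fix y assume "y \<in> E"
  then show "Ecoord j y \<in> K"
    by (metis EspaceE Ecoord_Evec Kcoeffs_def assms)
next
  fix y z assume "y \<in> E" "z \<in> E"
  then obtain a b where "Kcoeffs a" "y = Evec a" "Kcoeffs b" "z = Evec b" by (metis EspaceE)
  then show "Ecoord j (vadd y z) = Ecoord j y + Ecoord j z"
    by (simp add: Evec_add Ecoord_Evec Kcoeffs_add assms)
next
  fix c y assume "c \<in> K" "y \<in> E"
  then obtain a where "Kcoeffs a" "y = Evec a" by (metis EspaceE)
  then show "Ecoord j (vsmul c y) = c * Ecoord j y"
    by (simp add: Evec_smul Ecoord_Evec Kcoeffs_smul \<open>c \<in> K\<close> assms)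
qed

lemma Ecoord_vzero: "j \<le> n \<Longrightarrow> Ecoord j vzero = 0"
  unfolding vzero_eq_Evec by (simp add: Ecoord_Evec Kcoeffs_zero)

lemma exists_Ecoord_nonzero: assumes "y \<in> E" "y \<noteq> vzero" shows "\<exists>j\<le>n. Ecoord j y \<noteq> 0"
proof -
  obtain c where c: "Kcoeffs c" "y = Evec c" using assms(1) by (rule EspaceE)
  then have "\<not> (\<forall>j\<le>n. c j = 0)" using Evec_eq_vzero_iff assms(2) by blast
  then show ?thesis using Ecoord_Evec[OF c(1)] c(2) by auto
qed

text \<open>\<open>D \<oplus> D' = E\<close> as \<open>K\<close>-vector spaces, without any condition on the norm.\<close>
definition decomposes :: "(nat \<Rightarrow> 'a) set \<Rightarrow> (nat \<Rightarrow> 'a) set \<Rightarrow> bool" where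
  "decomposes D D' \<longleftrightarrow> ksubspace K D \<and> ksubspace K D' \<and> D \<subseteq> E \<and> D' \<subseteq> E \<and>
     (\<forall>y\<in>E. \<exists>!p. fst p \<in> D \<and> snd p \<in> D' \<and> y = vadd (fst p) (snd p))"

lemma decomposesD:
  assumes "decomposes D D'"
  shows "ksubspace K D" "ksubspace K D'" "D \<subseteq> E" "D' \<subseteq> E"
  using assms unfolding decomposes_def by simp_all

lemma decomposesE:
  assumes "decomposes D D'" "y \<in> E"
  obtains d d' where "d \<in> D" "d' \<in> D'" "y = vadd d d'"
proof -
  have "\<exists>!p. fst p \<in> D \<and> snd p \<in> D' \<and> y = vadd (fst p) (snd p)"
    using assms unfolding decomposes_def by blast
  then obtain p where "fst p \<in> D \<and> snd p \<in> D' \<and> y = vadd (fst p) (snd p)" by (rule ex1E)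
  then show ?thesis using that by blast
qed

lemma decomposes_unique:
  assumes dec: "decomposes D D'" and d: "d \<in> D" "d' \<in> D'" and e: "e \<in> D" "e' \<in> D'"
    and eq: "vadd d d' = vadd e e'"
  shows "d = e \<and> d' = e'"
proof -
  have "vadd d d' \<in> E" using decomposesD(3,4)[OF dec] d E_vadd by blast
  then have "\<exists>!p. fst p \<in> D \<and> snd p \<in> D' \<and> vadd d d' = vadd (fst p) (snd p)"
    using dec unfolding decomposes_def by blast
  then obtain p where p: "\<forall>q. fst q \<in> D \<and> snd q \<in> D' \<and> vadd d d' = vadd (fst q) (snd q) \<longrightarrow> q = p"
    by (rule ex1E) blast
  have "(d, d') = p" using p[rule_format, of "(d, d')"] d by simp
  moreover have "(e, e') = p" using p[rule_format, of "(e, e')"] e eq by simp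
  ultimately show ?thesis by (metis prod.inject)
qed

lemma decomposes_swap:
  assumes dec: "decomposes D D'" shows "decomposes D' D"
proof -
  have "\<exists>!p. fst p \<in> D' \<and> snd p \<in> D \<and> y = vadd (fst p) (snd p)" if y: "y \<in> E" for y
  proof -
    obtain d d' where d: "d \<in> D" "d' \<in> D'" "y = vadd d d'" using decomposesE[OF dec y] .
    show ?thesis
    proof (rule ex1I[of _ "(d', d)"])
      fix q assume q: "fst q \<in> D' \<and> snd q \<in> D \<and> y = vadd (fst q) (snd q)"
      have "vadd (snd q) (fst q) = vadd (fst q) (snd q)" by (rule vadd_commute)
      also have "\<dots> = y" using q by simp
      also have "\<dots> = vadd d d'" by (rule d(3))
      finally have "snd q = d \<and> fst q = d'" using decomposes_unique[OF dec] q d(1,2) by blast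
      then show "q = (d', d)" by (simp add: prod_eq_iff)
    qed (simp add: d vadd_commute)
  qed
  then show ?thesis using dec unfolding decomposes_def by blast
qed

definition proj :: "(nat \<Rightarrow> 'a) set \<Rightarrow> (nat \<Rightarrow> 'a) set \<Rightarrow> (nat \<Rightarrow> 'a) \<Rightarrow> nat \<Rightarrow> 'a" where
  "proj D D' y = fst (THE p. fst p \<in> D \<and> snd p \<in> D' \<and> y = vadd (fst p) (snd p))"

lemma proj_eq:
  assumes dec: "decomposes D D'" and "d \<in> D" "d' \<in> D'"
  shows "proj D D' (vadd d d') = d"
proof -
  have "vadd d d' \<in> E" using decomposesD(3,4)[OF dec] assms(2,3) E_vadd by blast
  then have "(THE p. fst p \<in> D \<and> snd p \<in> D' \<and> vadd d d' = vadd (fst p) (snd p)) = (d, d')"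
    using dec assms(2,3) unfolding decomposes_def by (intro the1_equality) auto
  then show ?thesis unfolding proj_def by simp
qed

lemma proj_in:
  assumes dec: "decomposes D D'" and "y \<in> E"
  obtains d' where "proj D D' y \<in> D" "d' \<in> D'" "y = vadd (proj D D' y) d'"
proof -
  obtain d d' where d: "d \<in> D" "d' \<in> D'" "y = vadd d d'" using decomposesE[OF dec assms(2)] .
  have "proj D D' y = d" unfolding d(3) by (rule proj_eq[OF dec d(1,2)])
  then show ?thesis using that[of d'] d by simp
qed

lemma proj_mem: "decomposes D D' \<Longrightarrow> y \<in> E \<Longrightarrow> proj D D' y \<in> D"
  by (rule proj_in)

lemma proj_of_mem: "decomposes D D' \<Longrightarrow> d \<in> D \<Longrightarrow> proj D D' d = d"
  using proj_eq[of D D' d vzero] vzero_in_ksubspace decomposesD by simp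

lemma proj_of_other: "decomposes D D' \<Longrightarrow> d' \<in> D' \<Longrightarrow> proj D D' d' = vzero"
  using proj_eq[of D D' vzero d'] vzero_in_ksubspace decomposesD by simp

lemma proj_vadd:
  assumes dec: "decomposes D D'" and "y \<in> E" "z \<in> E"
  shows "proj D D' (vadd y z) = vadd (proj D D' y) (proj D D' z)"
proof -
  obtain d d' where d: "d \<in> D" "d' \<in> D'" and y: "y = vadd d d'" using decomposesE[OF dec assms(2)] .
  obtain e e' where e: "e \<in> D" "e' \<in> D'" and z: "z = vadd e e'" using decomposesE[OF dec assms(3)] .
  have "vadd (vadd d d') (vadd e e') = vadd (vadd d e) (vadd d' e')"
    unfolding vadd_def by (simp add: algebra_simps)
  moreover have "vadd d e \<in> D" "vadd d' e' \<in> D'"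
    using decomposesD(1,2)[OF dec] d e by (simp_all add: ksubspace_vadd)
  ultimately show ?thesis unfolding y z using d e by (simp add: proj_eq[OF dec])
qed

lemma proj_vsmul:
  assumes dec: "decomposes D D'" and "c \<in> K" "y \<in> E"
  shows "proj D D' (vsmul c y) = vsmul c (proj D D' y)"
proof -
  obtain d d' where d: "d \<in> D" "d' \<in> D'" and y: "y = vadd d d'" using decomposesE[OF dec assms(3)] .
  have "vsmul c (vadd d d') = vadd (vsmul c d) (vsmul c d')"
    unfolding vadd_def vsmul_def by (simp add: algebra_simps)
  moreover have "vsmul c d \<in> D" "vsmul c d' \<in> D'"
    using decomposesD(1,2)[OF dec] d assms(2) by (simp_all add: ksubspace_vsmul)
  ultimately show ?thesis unfolding y using d by (simp add: proj_eq[OF dec])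
qed

text \<open>A coordinate of the projection onto \<open>D\<close> that does not vanish on \<open>d \<in> D\<close>.\<close>
lemma functional_on_summand:
  assumes dec: "decomposes D D'" and d: "d \<in> D" "d \<noteq> vzero"
  obtains phi where "klin_functional K E phi" "\<And>y. y \<in> E \<Longrightarrow> phi (proj D D' y) = phi y"
    "\<And>d'. d' \<in> D' \<Longrightarrow> phi d' = 0" "phi d \<noteq> 0"
proof -
  have DE: "D \<subseteq> E" using decomposesD(3)[OF dec] .
  obtain j where j: "j \<le> n" "Ecoord j d \<noteq> 0" using exists_Ecoord_nonzero d DE by blast
  define phi where "phi y = Ecoord j (proj D D' y)" for y
  have proj_E: "y \<in> E \<Longrightarrow> proj D D' y \<in> E" for y using proj_in[OF dec] DE by blast
  note coord = klin_functionalD[OF klin_functional_Ecoord[OF j(1)]]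
  have "klin_functional K E phi"
    unfolding klin_functional_def phi_def
    using coord proj_E proj_vadd[OF dec] proj_vsmul[OF dec] by simp
  moreover have "phi (proj D D' y) = phi y" if "y \<in> E" for y
    unfolding phi_def using proj_of_mem[OF dec proj_mem[OF dec that]] by simp
  moreover have "phi d' = 0" if "d' \<in> D'" for d'
    unfolding phi_def using proj_of_other[OF dec that] Ecoord_vzero[OF j(1)] by simp
  moreover have "phi d \<noteq> 0" unfolding phi_def using proj_of_mem[OF dec d(1)] j(2) by simp
  ultimately show ?thesis by (rule that)
qed

end

context balanced_E_space
begin

lemma functional_bound_through_summand:
  assumes dec: "decomposes D D'" and orth_sum: "\<forall>d\<in>D. \<forall>d'\<in>D'. N (vadd d d') = max (N d) (N d')"
    and phi: "klin_functional K E phi"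
    and psi_proj: "\<And>y. y \<in> E \<Longrightarrow> psi (proj D D' y) = psi y"
    and agree: "\<And>d. d \<in> D \<Longrightarrow> psi d = phi d"
    and y: "y \<in> E"
  shows "s * v (psi y) \<le> v (dual_image phi) * N y"
proof -
  obtain d' where d: "proj D D' y \<in> D" and d': "d' \<in> D'" "y = vadd (proj D D' y) d'"
    using proj_in[OF dec y] .
  have d_E: "proj D D' y \<in> E" using d decomposesD(3)[OF dec] by blast
  have "s * v (psi y) = s * v (phi (proj D D' y))" using psi_proj[OF y] agree[OF d] by simp
  also have "\<dots> \<le> v (dual_image phi) * N (proj D D' y)" by (rule functional_bound[OF phi d_E])
  also have "\<dots> \<le> v (dual_image phi) * N y"
  proof -
    have "N y = N (vadd (proj D D' y) d')" using d'(2) by (rule arg_cong)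
    also have "\<dots> = max (N (proj D D' y)) (N d')" using orth_sum d d'(1) by blast
    finally show ?thesis by (simp add: mult_left_mono)
  qed
  finally show ?thesis .
qed

text \<open>If \<open>E = D_1 \<oplus> D_2\<close>, take \<open>phi_i\<close> factoring through the projection onto \<open>D_i\<close>.  The
  norm of \<open>phi_1\<close> is then at most that of \<open>phi_1 - b phi_2\<close>, although \<open>b \<in> K\<close> can be chosen
  with \<open>v (dual_image (phi_1 - b phi_2)) < v (dual_image phi_1)\<close>, because \<open>K\<^sup>\<or>\<close> is an immediate
  extension.\<close>
theorem indecomposable_E: "indecomposable K N E"
  unfolding indecomposable_def
proof
  assume "decomposable K N E"
  then obtain D1 D2 where dec: "decomposes D1 D2" and nontriv: "D1 \<noteq> {vzero}" "D2 \<noteq> {vzero}"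
    and orth_sum: "\<forall>d1\<in>D1. \<forall>d2\<in>D2. N (vadd d1 d2) = max (N d1) (N d2)"
    unfolding decomposable_def decomposes_def by blast
  obtain d1 where d1: "d1 \<in> D1" "d1 \<noteq> vzero"
    using nontriv(1) vzero_in_ksubspace[OF decomposesD(1)[OF dec]] by blast
  obtain d2 where d2: "d2 \<in> D2" "d2 \<noteq> vzero"
    using nontriv(2) vzero_in_ksubspace[OF decomposesD(2)[OF dec]] by blast
  obtain phi1 where phi1: "klin_functional K E phi1" "\<And>y. y \<in> E \<Longrightarrow> phi1 (proj D1 D2 y) = phi1 y"
    "\<And>d. d \<in> D2 \<Longrightarrow> phi1 d = 0" "phi1 d1 \<noteq> 0"
    using functional_on_summand[OF dec d1] by blast
  obtain phi2 where phi2: "klin_functional K E phi2" "\<And>d. d \<in> D1 \<Longrightarrow> phi2 d = 0" "phi2 d2 \<noteq> 0"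
    using functional_on_summand[OF decomposes_swap[OF dec] d2] by blast
  have "dual_image phi1 \<noteq> 0" "dual_image phi2 \<noteq> 0"
    using dual_image_nonzero[OF phi1(1) _ phi1(4)] dual_image_nonzero[OF phi2(1) _ phi2(3)]
      d1(1) d2(1) decomposesD(3,4)[OF dec] by blast+
  then obtain b where b: "b \<in> K" "v (dual_image phi1 - b * dual_image phi2) < v (dual_image phi1)"
    by (rule immediate_approx_multiple)
  define phi where "phi y = phi1 y - b * phi2 y" for y
  have phi: "klin_functional K E phi"
    unfolding phi_def using klin_functional_diff[OF phi1(1) phi2(1) b(1)] .
  have "v (dual_image phi1) \<le> v (dual_image phi)"
    using functional_bound_through_summand[where psi = phi1, OF dec orth_sum phi phi1(2)] phi2(2)
    by (intro v_dual_image_le[OF phi1(1)]) (simp add: phi_def)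
  then show False using b(2) unfolding phi_def dual_image_diff by simp
qed

end

section \<open>Subspaces of dimension \<open>n\<close>\<close>

context E_space
begin

definition hyperplane :: "(nat \<Rightarrow> 'a) \<Rightarrow> (nat \<Rightarrow> 'a) set" where
  "hyperplane a = {Evec c | c. Kcoeffs c \<and> (\<Sum>i<Suc n. c i * a i) = 0}"

lemma Evec_in_hyperplane_iff:
  assumes c: "Kcoeffs c" shows "Evec c \<in> hyperplane a \<longleftrightarrow> (\<Sum>i<Suc n. c i * a i) = 0"
proof
  assume "Evec c \<in> hyperplane a"
  then obtain c' where c': "Kcoeffs c'" "Evec c = Evec c'" "(\<Sum>i<Suc n. c' i * a i) = 0"
    unfolding hyperplane_def by blast
  have "(\<Sum>i<Suc n. c i * a i) = (\<Sum>i<Suc n. c' i * a i)"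
    using Evec_inj[OF c c'(1,2)] by (intro sum.cong) auto
  then show "(\<Sum>i<Suc n. c i * a i) = 0" using c'(3) by simp
qed (use c in \<open>auto simp: hyperplane_def\<close>)

lemma hyperplane_vectors_dependent:
  assumes p: "p \<le> n" "a p \<noteq> 0"
    and C: "\<And>j. j \<le> n \<Longrightarrow> Kcoeffs (C j)" "\<And>j. j \<le> n \<Longrightarrow> (\<Sum>i<Suc n. C j i * a i) = 0"
  obtains lam where "\<forall>j\<le>n. lam j \<in> K" "\<exists>j\<le>n. lam j \<noteq> 0"
    "(\<lambda>k. \<Sum>j<Suc n. lam j * Evec (C j) k) = vzero"
proof -
  have "card ({..n} - {p}) < Suc n" using p(1) by (simp add: card_Diff_singleton)
  moreover have "\<forall>i\<in>{..n} - {p}. \<forall>j<Suc n. C j i \<in> K" using C(1) by (auto simp: Kcoeffs_def)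
  ultimately have "\<exists>lam. (\<forall>j<Suc n. lam j \<in> K) \<and> (\<exists>j<Suc n. lam j \<noteq> 0)
      \<and> (\<forall>i\<in>{..n} - {p}. (\<Sum>j<Suc n. C j i * lam j) = 0)"
    by (intro exists_nontrivial_solution) auto
  then obtain lam where lam: "\<forall>j\<le>n. lam j \<in> K" "\<exists>j\<le>n. lam j \<noteq> 0"
      "\<forall>i\<in>{..n} - {p}. (\<Sum>j<Suc n. C j i * lam j) = 0"
    by (auto simp: less_Suc_eq_le)
  define Z where "Z i = (\<Sum>j<Suc n. lam j * C j i)" for i
  have Z_other: "Z i = 0" if "i \<le> n" "i \<noteq> p" for i
    using lam(3) that unfolding Z_def by (simp add: mult.commute)
  have "(\<Sum>i<Suc n. a i * Z i) = (\<Sum>j<Suc n. lam j * (\<Sum>i<Suc n. C j i * a i))"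
    unfolding Z_def sum_distrib_left by (subst sum.swap) (simp add: algebra_simps)
  also have "\<dots> = 0" using C(2) by (simp add: less_Suc_eq_le)
  finally have "(\<Sum>i<Suc n. a i * Z i) = 0" .
  moreover have "(\<Sum>i<Suc n. a i * Z i) = a p * Z p + (\<Sum>i\<in>{..<Suc n} - {p}. a i * Z i)"
    using p(1) by (subst sum.remove[of _ p]) auto
  moreover have "(\<Sum>i\<in>{..<Suc n} - {p}. a i * Z i) = 0" using Z_other by (intro sum.neutral) auto
  ultimately have "Z p = 0" using p(2) by simp
  then have Z_zero: "Z i = 0" if "i \<le> n" for i using Z_other that by (cases "i = p") auto
  have "(\<lambda>k. \<Sum>j<Suc n. lam j * Evec (C j) k) = Evec Z" unfolding Z_def by (rule Evec_sum)
  also have "\<dots> = vzero" unfolding vzero_eq_Evec by (rule Evec_cong) (rule Z_zero)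
  finally show ?thesis using that lam by blast
qed

lemma kspan_subset_hyperplane:
  assumes C: "\<And>l. l < length bs \<Longrightarrow> Kcoeffs (C l) \<and> bs ! l = Evec (C l)"
    and C_a: "\<And>l. l < length bs \<Longrightarrow> (\<Sum>j<Suc n. C l j * a j) = 0"
  shows "kspan K bs \<subseteq> hyperplane a"
proof
  fix y assume "y \<in> kspan K bs"
  then obtain d where d: "\<forall>l<length bs. d l \<in> K" "y = (\<lambda>i. \<Sum>l<length bs. d l * (bs ! l) i)"
    unfolding kspan_def by blast
  have "y = (\<lambda>i. \<Sum>l<length bs. d l * Evec (C l) i)" unfolding d(2) using C by (intro ext sum.cong) auto
  also have "\<dots> = Evec (\<lambda>j. \<Sum>l<length bs. d l * C l j)" by (rule Evec_sum)
  finally have y: "y = Evec (\<lambda>j. \<Sum>l<length bs. d l * C l j)" .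
  have coeffs: "Kcoeffs (\<lambda>j. \<Sum>l<length bs. d l * C l j)"
    using C d(1) unfolding Kcoeffs_def by (auto intro!: K_sum K_mult)
  have "(\<Sum>i<Suc n. (\<Sum>l<length bs. d l * C l i) * a i)
      = (\<Sum>l<length bs. d l * (\<Sum>i<Suc n. C l i * a i))"
    unfolding sum_distrib_right sum_distrib_left by (subst sum.swap) (simp add: mult.assoc)
  also have "\<dots> = 0" using C_a by simp
  finally show "y \<in> hyperplane a" unfolding y Evec_in_hyperplane_iff[OF coeffs] .
qed

text \<open>A vector of \<open>hyperplane a\<close> outside \<open>kspan K bs\<close> would make \<open>n + 1\<close> independent vectors
  in it.\<close>
lemma hyperplane_subset_kspan:
  assumes bs: "length bs = n" "klin_indep K bs"
    and C: "\<And>l. l < n \<Longrightarrow> Kcoeffs (C l) \<and> bs ! l = Evec (C l)"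
    and C_a: "\<And>l. l < n \<Longrightarrow> (\<Sum>j<Suc n. C l j * a j) = 0"
    and p: "p \<le> n" "a p \<noteq> 0"
  shows "hyperplane a \<subseteq> kspan K bs"
proof
  fix y assume "y \<in> hyperplane a"
  then obtain c where c: "Kcoeffs c" "y = Evec c" "(\<Sum>i<Suc n. c i * a i) = 0"
    unfolding hyperplane_def by blast
  define Cy where "Cy j = (if j < n then C j else c)" for j
  obtain lam where lam: "\<forall>j\<le>n. lam j \<in> K" "\<exists>j\<le>n. lam j \<noteq> 0"
    and dep: "(\<lambda>k. \<Sum>j<Suc n. lam j * Evec (Cy j) k) = vzero"
    by (rule hyperplane_vectors_dependent[where C = Cy and a = a, OF p]) (use C C_a c in \<open>auto simp: Cy_def\<close>)
  have dep_k: "(\<Sum>j<n. lam j * (bs ! j) k) + lam n * y k = 0" for k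
  proof -
    have "(\<Sum>j<n. lam j * Evec (Cy j) k) = (\<Sum>j<n. lam j * (bs ! j) k)"
      using C unfolding Cy_def by (intro sum.cong) auto
    then show ?thesis using fun_cong[OF dep, of k] c(2) by (simp add: Cy_def vzero_def)
  qed
  show "y \<in> kspan K bs"
  proof (cases "lam n = 0")
    case True
    then have "(\<lambda>i. \<Sum>j<length bs. lam j * (bs ! j) i) = vzero"
      using dep_k bs(1) unfolding vzero_def by (intro ext) simp
    then have "\<forall>j<n. lam j = 0" using bs(1,2) lam(1) unfolding klin_indep_def by simp
    then show ?thesis using lam(2) True by (metis le_neq_implies_less)
  next
    case False
    define d where "d j = - lam j / lam n" for j
    have "y = (\<lambda>i. \<Sum>j<length bs. d j * (bs ! j) i)"
    proof
      fix k
      have "y k = - (\<Sum>j<n. lam j * (bs ! j) k) / lam n"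
        using dep_k[of k] False by (simp add: field_simps add_eq_0_iff)
      then show "y k = (\<Sum>j<length bs. d j * (bs ! j) k)"
        unfolding d_def bs(1) by (simp add: sum_divide_distrib sum_negf[symmetric])
    qed
    moreover have "\<forall>j<length bs. d j \<in> K"
      unfolding d_def using lam(1) bs(1) by (auto intro!: K_uminus K_divide)
    ultimately show ?thesis unfolding kspan_def by blast
  qed
qed

lemma hyperplane_of_basis:
  assumes bs: "length bs = n" "klin_indep K bs" "set bs \<subseteq> E"
  obtains a where "\<forall>j\<le>n. a j \<in> K" "\<exists>j\<le>n. a j \<noteq> 0" "kspan K bs = hyperplane a"
proof -
  have "\<exists>c. Kcoeffs c \<and> bs ! l = Evec c" if "l < n" for l
    using bs(1,3) that EspaceE by (metis nth_mem subsetD)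
  then obtain C where C: "\<And>l. l < n \<Longrightarrow> Kcoeffs (C l) \<and> bs ! l = Evec (C l)" by metis
  have "\<exists>a. (\<forall>j<Suc n. a j \<in> K) \<and> (\<exists>j<Suc n. a j \<noteq> 0) \<and> (\<forall>l\<in>{..<n}. (\<Sum>j<Suc n. C l j * a j) = 0)"
    using C by (intro exists_nontrivial_solution) (auto simp: Kcoeffs_def less_Suc_eq_le)
  then obtain a where a: "\<forall>j\<le>n. a j \<in> K" "\<exists>j\<le>n. a j \<noteq> 0"
      and C_a: "\<And>l. l < n \<Longrightarrow> (\<Sum>j<Suc n. C l j * a j) = 0"
    by (auto simp: less_Suc_eq_le)
  obtain p where p: "p \<le> n" "a p \<noteq> 0" using a(2) by blast
  have "kspan K bs = hyperplane a"
    using kspan_subset_hyperplane[of bs C a] hyperplane_subset_kspan[OF bs(1,2) C C_a p] C C_a bs(1)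
    by auto
  then show ?thesis using that a by blast
qed

lemma subspace_eq_hyperplane:
  assumes "D \<subseteq> E" "kdim_is K D n"
  obtains a where "\<forall>j\<le>n. a j \<in> K" "\<exists>j\<le>n. a j \<noteq> 0" "D = hyperplane a"
proof -
  obtain bs where bs: "length bs = n" "klin_indep K bs" "kspan K bs = D"
    using assms(2) unfolding kdim_is_def by blast
  have "set bs \<subseteq> E" using assms(1) bs(3) kspan_nth by (metis in_set_conv_nth subsetD subsetI)
  then show ?thesis using hyperplane_of_basis[OF bs(1,2)] that bs(3) by metis
qed

lemma Kn_eq_Evec: "al \<in> Kn K n \<Longrightarrow> al = Evec (al(n := 0))"
  unfolding Kn_def by (auto simp: Evec_def)

lemma Kcoeffs_Kn: "al \<in> Kn K n \<Longrightarrow> Kcoeffs (al(n := 0))"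
  unfolding Kn_def Kcoeffs_def by auto

lemma Kn_subset_hyperplane:
  assumes "\<forall>i<n. a i = 0" shows "Kn K n \<subseteq> hyperplane a"
proof
  fix al assume al: "al \<in> Kn K n"
  have "(\<Sum>i<Suc n. (al(n := 0)) i * a i) = 0" using assms by simp
  then have "Evec (al(n := 0)) \<in> hyperplane a"
    using Evec_in_hyperplane_iff[OF Kcoeffs_Kn[OF al]] by simp
  then show "al \<in> hyperplane a" by (subst Kn_eq_Evec[OF al])
qed

lemma hyperplane_eq_Kn:
  assumes "\<forall>i<n. a i = 0" "a n \<noteq> 0" shows "hyperplane a = Kn K n"
proof
  show "Kn K n \<subseteq> hyperplane a" using Kn_subset_hyperplane assms(1) .
  show "hyperplane a \<subseteq> Kn K n"
  proof
    fix y assume "y \<in> hyperplane a"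
    then obtain c where c: "Kcoeffs c" "y = Evec c" "(\<Sum>i<Suc n. c i * a i) = 0"
      unfolding hyperplane_def by blast
    then have "c n = 0" using assms by simp
    then show "y \<in> Kn K n" using c(1,2) unfolding Kn_def Kcoeffs_def by auto
  qed
qed

lemma iso_to_Kn_Kn: "iso_to_Kn K v n t N (Kn K n)"
  unfolding iso_to_Kn_def by (intro exI[of _ "\<lambda>y. y"]) (simp add: bij_betw_def)

lemma exists_max_weight:
  assumes "\<exists>i<n. a i \<noteq> 0"
  obtains k where "k < n" "a k \<noteq> 0" "\<And>i. i < n \<Longrightarrow> v (a i) * t k \<le> v (a k) * t i"
proof -
  define f where "f i = v (a i) / t i" for i
  have "Max (f ` {..<n}) \<in> f ` {..<n}" using n_pos by (intro Max_in) (auto simp: lessThan_empty_iff)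
  then obtain k where k: "k < n" "f k = Max (f ` {..<n})" by auto
  have f_le: "f i \<le> f k" if "i < n" for i unfolding k(2) using that by (intro Max_ge) auto
  obtain i where "i < n" "a i \<noteq> 0" using assms by blast
  then have "0 < f i" unfolding f_def using t_pos by (simp add: v_pos_iff)
  then have "a k \<noteq> 0" using f_le[OF \<open>i < n\<close>] unfolding f_def by auto
  moreover have "v (a i) * t k \<le> v (a k) * t i" if "i < n" for i
    using f_le[OF that] t_pos that k(1) unfolding f_def by (simp add: field_simps)
  ultimately show ?thesis using that k(1) by blast
qed

lemma hyperplane_correction:
  assumes a: "\<forall>j\<le>n. a j \<in> K" and k: "k < n" "a k \<noteq> 0" and c: "Kcoeffs c" "c n = 1"
  obtains g where "Kcoeffs g" "g n = 1" "(\<Sum>i<Suc n. g i * a i) = 0"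
    "\<And>i. i < n \<Longrightarrow> i \<noteq> k \<Longrightarrow> Evec g i = Evec c i"
proof -
  define S where "S = (\<Sum>i<Suc n. c i * a i)"
  define g where "g j = c j - (if j = k then S / a k else 0)" for j
  have g_a: "g i * a i = c i * a i - (if i = k then S else 0)" for i
    using k(2) by (simp add: g_def left_diff_distrib)
  have "S \<in> K" unfolding S_def using a c(1)
    by (intro K_sum K_mult) (auto simp: Kcoeffs_def less_Suc_eq_le simp del: sum.lessThan_Suc)
  then have "Kcoeffs g" using c(1) a k unfolding g_def Kcoeffs_def by (auto intro!: K_diff K_divide)
  moreover have "g n = 1" using c(2) k(1) by (simp add: g_def)
  moreover have "(\<Sum>i<Suc n. g i * a i) = 0"
    unfolding g_a sum_subtractf using k(1) by (simp add: S_def del: sum.lessThan_Suc)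
  moreover have "Evec g i = Evec c i" if "i < n" "i \<noteq> k" for i
    using that k(1) c(2) by (simp add: g_def)
  ultimately show ?thesis using that by blast
qed

lemma hyperplane_coordinate_eq:
  assumes "c n = 1" "k < n"
  shows "a k * Evec c k = (\<Sum>i<Suc n. c i * a i) - (a n - (\<Sum>i<n. a i * x i))
    - (\<Sum>i\<in>{..<n}-{k}. a i * Evec c i)"
proof -
  have "(\<Sum>i\<in>{..<n}-{k}. a i * Evec c i) = (\<Sum>i\<in>{..<n}-{k}. c i * a i) + (\<Sum>i\<in>{..<n}-{k}. a i * x i)"
    using assms(1) by (simp add: sum.distrib algebra_simps)
  moreover have "(\<Sum>i<n. f i) = f k + (\<Sum>i\<in>{..<n}-{k}. f i)" for f :: "nat \<Rightarrow> 'a"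
    using assms(2) by (simp add: sum.remove)
  ultimately show ?thesis using assms by (simp add: algebra_simps)
qed

end

context balanced_E_space
begin

text \<open>Take a vector \<open>(x_i - e_i)_i\<close> approximating the distances \<open>r_i\<close> and correct its \<open>k\<close>-th
  coefficient; by orthogonality the \<open>k\<close>-th coordinate then has size
  \<open>v (a n - \<Sum> a_i x_i) / v (a k) > r_k\<close>.\<close>
lemma exists_dominant_hyperplane_vector:
  assumes a: "\<forall>j\<le>n. a j \<in> K" and k: "k < n" "a k \<noteq> 0"
  obtains g where "Kcoeffs g" "g n = 1" "(\<Sum>i<Suc n. g i * a i) = 0"
    "\<And>i. i < n \<Longrightarrow> i \<noteq> k \<Longrightarrow> t i * v (Evec g i) < t k * v (Evec g k)"
proof -
  define W where "W = a n - (\<Sum>i<n. a i * x i)"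
  define R where "R = Max ((\<lambda>i. v (a i) * r i) ` {..<n})"
  have R_ge: "v (a i) * r i \<le> R" if "i < n" for i unfolding R_def using that by (intro Max_ge) auto
  have "0 < v (a k) * r k" using k r_pos[OF k(1)] by (simp add: v_pos_iff)
  then have R_pos: "0 < R" using R_ge[OF k(1)] by linarith
  have dist_W: "dK W = R" unfolding W_def R_def using a by (intro distK_comb) auto
  then have "W \<notin> K" using R_pos distK_of_K[of W] by auto
  then have R_less: "R < v W" using distK_less_v[of W 0] dist_W by simp
  then obtain rho where rho: "1 < rho" "rho * R < v W" using exists_factor_gt_one R_pos by force
  obtain c where c: "Kcoeffs c" "c n = 1" "\<forall>i<n. v (Evec c i) < rho * r i"
    using exists_close_vector[OF rho(1)] by blast
  obtain g where g: "Kcoeffs g" and g_n: "g n = 1" and g_eq: "(\<Sum>i<Suc n. g i * a i) = 0"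
    and g_other: "\<And>i. i < n \<Longrightarrow> i \<noteq> k \<Longrightarrow> Evec g i = Evec c i"
    using hyperplane_correction[OF a k c(1,2)] by blast
  have "v (\<Sum>i\<in>{..<n}-{k}. a i * Evec g i) < v W"
  proof (rule v_sum_less)
    fix i assume "i \<in> {..<n} - {k}"
    then have i: "i < n" "i \<noteq> k" by auto
    have "v (a i * Evec g i) \<le> v (a i) * (rho * r i)"
      using c(3) i g_other[OF i] by (simp add: mult_left_mono less_imp_le)
    also have "\<dots> \<le> rho * R" using R_ge[OF i(1)] rho(1) by (simp add: algebra_simps)
    finally show "v (a i * Evec g i) < v W" using rho(2) by simp
  qed (use R_pos R_less in simp_all)
  then have "v (- W + - (\<Sum>i\<in>{..<n}-{k}. a i * Evec g i)) = v (- W)"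
    by (intro v_add_eq_left) simp
  moreover have "a k * Evec g k = - W + - (\<Sum>i\<in>{..<n}-{k}. a i * Evec g i)"
    using hyperplane_coordinate_eq[where a = a and c = g and k = k, OF g_n k(1)] g_eq unfolding W_def by simp
  ultimately have "v (a k * Evec g k) = v W" by simp
  moreover have "rho * (v (a k) * r k) \<le> rho * R"
    using R_ge[OF k(1)] rho(1) by (intro mult_left_mono) auto
  ultimately have "rho * r k * v (a k) < v (Evec g k) * v (a k)"
    using rho(2) by (simp add: algebra_simps)
  then have "rho * r k < v (Evec g k)" using k(2) by (simp add: v_pos_iff)
  then have "t k * (rho * r k) < t k * v (Evec g k)" using t_pos k(1) by simp
  moreover have "t k * (rho * r k) = rho * s" using balanced k(1) by (simp add: algebra_simps)
  ultimately have big: "rho * s < t k * v (Evec g k)" by simp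
  have "t i * v (Evec g i) < t k * v (Evec g k)" if "i < n" "i \<noteq> k" for i
  proof -
    have "t i * v (Evec g i) < t i * (rho * r i)" using c(3) t_pos that g_other[OF that] by simp
    also have "\<dots> = rho * s" using balanced that by (simp add: algebra_simps)
    finally show ?thesis using big by simp
  qed
  then show ?thesis using that g g_n g_eq by blast
qed

end

locale dominated_hyperplane = balanced_E_space +
  fixes a :: "nat \<Rightarrow> 'a" and k :: nat and g :: "nat \<Rightarrow> 'a" and lam :: 'a
  assumes a_K: "\<forall>j\<le>n. a j \<in> K" and k: "k < n" "a k \<noteq> 0"
    and k_max: "\<And>i. i < n \<Longrightarrow> v (a i) * t k \<le> v (a k) * t i"
    and g: "Kcoeffs g" "g n = 1" "(\<Sum>i<Suc n. g i * a i) = 0"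
    and g_dominant: "\<And>i. i < n \<Longrightarrow> i \<noteq> k \<Longrightarrow> t i * v (Evec g i) < t k * v (Evec g k)"
    and lam: "lam \<in> K" "v lam = v (Evec g k)" and lam_nonzero: "lam \<noteq> 0"
begin

definition coord_shift :: "(nat \<Rightarrow> 'a) \<Rightarrow> 'a" where
  "coord_shift al = (\<Sum>j\<in>{..<n}-{k}. a j / a k * al j)"

text \<open>The isometry \<open>K\<^sup>n \<rightarrow> hyperplane a\<close>: \<open>al\<close> is sent to \<open>(al k / lam) Evec g\<close> plus the vector
  of \<open>K\<^sup>n \<inter> hyperplane a\<close> that agrees with \<open>al\<close> off the \<open>k\<close>-th coordinate.\<close>
definition iso_map :: "(nat \<Rightarrow> 'a) \<Rightarrow> nat \<Rightarrow> 'a" where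
  "iso_map al =
     (\<lambda>i. if i = k then al k / lam * Evec g k - coord_shift al else al i + al k / lam * Evec g i)"

lemma iso_map_eq_Evec:
  assumes "al \<in> Kn K n"
  shows "iso_map al = Evec (\<lambda>j. al k / lam * g j + (if j = n then 0 else if j = k then - coord_shift al else al j))"
proof
  fix i
  show "iso_map al i = Evec (\<lambda>j. al k / lam * g j + (if j = n then 0 else if j = k then - coord_shift al else al j)) i"
  proof (cases "i < n")
    case True
    then show ?thesis using k(1) g(2) by (auto simp: iso_map_def algebra_simps)
  next
    case False
    then show ?thesis using assms k(1) unfolding iso_map_def Kn_def by auto
  qed
qed

lemma iso_map_coeffs:
  assumes "al \<in> Kn K n"
  shows "Kcoeffs (\<lambda>j. al k / lam * g j + (if j = n then 0 else if j = k then - coord_shift al else al j))"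
proof -
  have "al j \<in> K" if "j < n" for j using assms that unfolding Kn_def by blast
  moreover have "coord_shift al \<in> K" unfolding coord_shift_def using a_K k calculation
    by (intro K_sum K_mult K_divide) auto
  ultimately show ?thesis using g(1) lam(1) k(1) unfolding Kcoeffs_def
    by (auto intro!: K_add K_mult K_divide K_uminus)
qed

lemma iso_map_in_hyperplane: "al \<in> Kn K n \<Longrightarrow> iso_map al \<in> hyperplane a"
proof -
  assume al: "al \<in> Kn K n"
  let ?c = "\<lambda>j. al k / lam * g j + (if j = n then 0 else if j = k then - coord_shift al else al j)"
  have "(\<Sum>i<n. (if i = k then - coord_shift al else al i) * a i)
      = - coord_shift al * a k + (\<Sum>i\<in>{..<n}-{k}. al i * a i)"
    using k(1) by (simp add: sum.remove)
  also have "\<dots> = 0"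
  proof -
    have "coord_shift al * a k = (\<Sum>i\<in>{..<n}-{k}. al i * a i)"
      unfolding coord_shift_def sum_distrib_right using k(2) by (intro sum.cong) auto
    then show ?thesis by simp
  qed
  finally have "(\<Sum>i<Suc n. ?c i * a i) = al k / lam * (\<Sum>i<Suc n. g i * a i)"
    by (simp add: distrib_right sum.distrib sum_distrib_left algebra_simps)
  then show ?thesis
    unfolding iso_map_eq_Evec[OF al] Evec_in_hyperplane_iff[OF iso_map_coeffs[OF al]] g(3) by simp
qed

lemma coord_shift_vadd: "coord_shift (vadd al be) = coord_shift al + coord_shift be"
  unfolding coord_shift_def vadd_def by (simp add: distrib_left sum.distrib)

lemma coord_shift_vsmul: "coord_shift (vsmul c al) = c * coord_shift al"
  unfolding coord_shift_def vsmul_def by (simp add: sum_distrib_left ac_simps)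

lemma iso_map_vadd: "iso_map (vadd al be) = vadd (iso_map al) (iso_map be)"
  unfolding iso_map_def coord_shift_vadd by (auto simp: vadd_def fun_eq_iff add_divide_distrib algebra_simps)

lemma iso_map_vsmul: "iso_map (vsmul c al) = vsmul c (iso_map al)"
  unfolding iso_map_def coord_shift_vsmul by (auto simp: vsmul_def fun_eq_iff algebra_simps)

lemma iso_map_apply_k: "iso_map al k = al k / lam * Evec g k - coord_shift al"
  and iso_map_apply_other: "i \<noteq> k \<Longrightarrow> iso_map al i = al i + al k / lam * Evec g i"
  by (simp_all add: iso_map_def)

lemma coord_shift_le: "t k * v (coord_shift al) \<le> pnorm_except k al"
proof -
  have tk: "0 < t k" using t_pos k(1) by simp
  have "v (coord_shift al) \<le> pnorm_except k al / t k"
    unfolding coord_shift_def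
  proof (rule v_sum_le)
    fix i assume "i \<in> {..<n} - {k}"
    then have i: "i < n" "i \<noteq> k" by auto
    have "t k * v (a i / a k * al i) = v (a i) * t k * v (al i) / v (a k)" by simp
    also have "\<dots> \<le> v (a k) * t i * v (al i) / v (a k)"
      using k_max[OF i(1)] by (intro divide_right_mono mult_right_mono) auto
    also have "\<dots> = t i * v (al i)" using k(2) by simp
    also have "\<dots> \<le> pnorm_except k al" by (rule pnorm_except_ge[OF i])
    finally show "v (a i / a k * al i) \<le> pnorm_except k al / t k" using tk by (simp add: field_simps)
  qed (use pnorm_except_nonneg tk in simp_all)
  then show ?thesis using tk by (simp add: field_simps)
qed

lemma v_iso_map_coeff: "v (al k / lam) * v (Evec g k) = v (al k)"
proof -
  have "v (Evec g k) \<noteq> 0" using lam(2) lam_nonzero by (metis v_eq_0_iff)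
  then show ?thesis using lam(2) by simp
qed

lemma v_iso_map_k_term: "v (al k / lam * Evec g k) = v (al k)"
  using v_iso_map_coeff by (simp only: v_mult)

lemma iso_map_other_term_less:
  assumes "i < n" "i \<noteq> k" "al k \<noteq> 0"
  shows "t i * v (al k / lam * Evec g i) < t k * v (al k)"
proof -
  have "0 < v (al k / lam)" using assms(3) lam_nonzero by (simp add: v_pos_iff)
  then have "v (al k / lam) * (t i * v (Evec g i)) < v (al k / lam) * (t k * v (Evec g k))"
    using g_dominant[OF assms(1,2)] by (intro mult_strict_left_mono)
  also have "\<dots> = t k * v (al k)" using v_iso_map_coeff[of al] by (simp only: ac_simps)
  finally show ?thesis by (simp only: v_mult ac_simps)
qed

lemma pnorm_iso_map_le: "N (iso_map al) \<le> max (pnorm_except k al) (t k * v (al k))"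
proof (rule pnorm_le)
  fix i assume i: "i < n"
  let ?P = "pnorm_except k al" and ?Q = "t k * v (al k)"
  have ti: "0 \<le> t i" using t_pos i by (simp add: less_imp_le)
  show "t i * v (iso_map al i) \<le> max ?P ?Q"
  proof (cases "i = k")
    case True
    have "t k * v (iso_map al k) \<le> t k * max (v (al k / lam * Evec g k)) (v (coord_shift al))"
      using ti True unfolding iso_map_apply_k by (intro mult_left_mono v_diff_le_max) auto
    also have "\<dots> = max ?Q (t k * v (coord_shift al))"
      using ti True unfolding v_iso_map_k_term by (simp add: max_mult_distrib_left)
    also have "\<dots> \<le> max ?P ?Q" using coord_shift_le[of al] by auto
    finally show ?thesis using True by simp
  next
    case False
    have "t i * v (iso_map al i) \<le> t i * max (v (al i)) (v (al k / lam * Evec g i))"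
      using ti unfolding iso_map_apply_other[OF False] by (intro mult_left_mono v_add_le_max)
    also have "\<dots> = max (t i * v (al i)) (t i * v (al k / lam * Evec g i))"
      using ti by (simp add: max_mult_distrib_left)
    also have "\<dots> \<le> max ?P ?Q"
    proof -
      have "t i * v (al k / lam * Evec g i) \<le> ?Q"
        using iso_map_other_term_less[where al = al, OF i False] by (cases "al k = 0") (auto simp: less_imp_le)
      then show ?thesis using pnorm_except_ge[OF i False, of al] by (rule max.mono[rotated])
    qed
    finally show ?thesis .
  qed
qed

lemma pnorm_iso_map_ge: "max (pnorm_except k al) (t k * v (al k)) \<le> N (iso_map al)"
proof (cases "pnorm_except k al < t k * v (al k)")
  case True
  have tk: "0 < t k" using t_pos k(1) by simp
  have "t k * v (coord_shift al) < t k * v (al k / lam * Evec g k)"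
    unfolding v_iso_map_k_term using True coord_shift_le[of al] by linarith
  then have "v (- coord_shift al) < v (al k / lam * Evec g k)"
    by (simp only: mult_less_cancel_left_pos[OF tk] v_minus)
  then have "v (al k / lam * Evec g k + - coord_shift al) = v (al k / lam * Evec g k)"
    by (rule v_add_eq_left)
  then have "v (iso_map al k) = v (al k / lam * Evec g k)"
    by (simp only: iso_map_apply_k diff_conv_add_uminus)
  then show ?thesis using True pnorm_ge[OF k(1), of "iso_map al"] unfolding v_iso_map_k_term by simp
next
  case False
  show ?thesis
  proof (cases "pnorm_except k al = 0")
    case True
    then show ?thesis using False pnorm_nonneg[of "iso_map al"] by simp
  next
    case nonzero: False
    then have "0 < pnorm_except k al" using pnorm_except_nonneg[of k al] by simp
    then obtain i where i: "i < n" "i \<noteq> k" and P: "pnorm_except k al = t i * v (al i)"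
      by (rule pnorm_except_attained)
    have ti: "0 < t i" using t_pos i(1) by simp
    have "t i * v (al k / lam * Evec g i) < t i * v (al i)"
    proof (cases "al k = 0")
      case True
      then show ?thesis using \<open>0 < pnorm_except k al\<close> P by simp
    next
      case False
      then show ?thesis using iso_map_other_term_less[where al = al, OF i False] \<open>\<not> _ < _\<close> P by simp
    qed
    then have "v (al k / lam * Evec g i) < v (al i)" by (simp only: mult_less_cancel_left_pos[OF ti])
    then have "v (al i + al k / lam * Evec g i) = v (al i)" by (rule v_add_eq_left)
    then have "v (iso_map al i) = v (al i)" by (simp only: iso_map_apply_other[OF i(2)])
    then show ?thesis using False P pnorm_ge[OF i(1), of "iso_map al"] by simp
  qed
qed

lemma pnorm_iso_map: "N (iso_map al) = N al"
  using pnorm_iso_map_le pnorm_iso_map_ge pnorm_split[OF k(1), of al] by (metis antisym)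

lemma hyperplane_subset_iso_map_image: "hyperplane a \<subseteq> iso_map ` Kn K n"
proof
  fix y assume "y \<in> hyperplane a"
  then obtain c where c: "Kcoeffs c" "y = Evec c" "(\<Sum>i<Suc n. c i * a i) = 0"
    unfolding hyperplane_def by blast
  define al where "al i = (if i < n then if i = k then lam * c n else c i - c n * g i else 0)" for i
  have al: "al \<in> Kn K n"
    unfolding Kn_def al_def using c(1) g(1) lam(1) unfolding Kcoeffs_def by (auto intro!: K_diff K_mult)
  have al_k: "al k / lam = c n" using k(1) lam_nonzero by (simp add: al_def)
  have sum_split: "(\<Sum>i<Suc n. f i * a i) = f n * a n + f k * a k + (\<Sum>j\<in>{..<n}-{k}. f j * a j)" for f
    using k(1) by (simp add: sum.remove)
  have "a k * coord_shift al = (\<Sum>j\<in>{..<n}-{k}. c j * a j) - c n * (\<Sum>j\<in>{..<n}-{k}. g j * a j)"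
    unfolding coord_shift_def sum_distrib_left sum_subtractf[symmetric]
    using k(2) by (intro sum.cong) (auto simp: al_def field_simps)
  also have "\<dots> = a k * (c n * g k - c k)"
    using sum_split[of c] sum_split[of g] c(3) g(2,3) by algebra
  finally have shift_al: "coord_shift al = c n * g k - c k" using k(2) by simp
  have "iso_map al = y"
  proof
    fix i
    show "iso_map al i = y i"
    proof (cases "i = k")
      case True
      have "iso_map al k = c k + c n * x k"
        unfolding iso_map_apply_k al_k shift_al using k(1) g(2) by (simp add: algebra_simps)
      then show ?thesis using True c(2) k(1) by simp
    next
      case False
      then show ?thesis unfolding iso_map_apply_other[OF False] al_k c(2)
        using g(2) by (cases "i < n") (simp_all add: al_def algebra_simps)
    qed
  qed
  then show "y \<in> iso_map ` Kn K n" using al by blast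
qed

lemma inj_on_iso_map: "inj_on iso_map (Kn K n)"
proof (rule inj_onI)
  fix al be assume al: "al \<in> Kn K n" and be: "be \<in> Kn K n" and eq: "iso_map al = iso_map be"
  define d where "d = vadd al (vsmul (- 1) be)"
  have "iso_map d = vadd (iso_map al) (vsmul (- 1) (iso_map be))"
    unfolding d_def iso_map_vadd iso_map_vsmul ..
  moreover have "vadd (iso_map be) (vsmul (- 1) (iso_map be)) = vzero"
    by (simp only: vadd_minus_eq_vzero_iff)
  ultimately have "iso_map d = vzero" using eq by simp
  then have "N d = 0" using pnorm_iso_map[of d] pnorm_le[of vzero 0] pnorm_nonneg[of vzero]
    by (simp add: vzero_def)
  have "d i = 0" if "i < n" for i
  proof -
    have "t i * v (d i) \<le> 0" using pnorm_ge[OF that, of d] \<open>N d = 0\<close> by simp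
    moreover have "0 < t i" using t_pos that by simp
    ultimately have "v (d i) \<le> 0" by (simp add: mult_le_0_iff)
    then show ?thesis using v_nonneg[of "d i"] by simp
  qed
  then have "al i = be i" if "i < n" for i using that unfolding d_def vadd_def vsmul_def by simp
  moreover have "al i = be i" if "n \<le> i" for i using al be that unfolding Kn_def by simp
  ultimately show "al = be" by (meson ext not_le)
qed

theorem iso_to_Kn_hyperplane: "iso_to_Kn K v n t N (hyperplane a)"
  unfolding iso_to_Kn_def
proof (intro exI[of _ iso_map] conjI ballI)
  show "bij_betw iso_map (Kn K n) (hyperplane a)"
    unfolding bij_betw_def using inj_on_iso_map iso_map_in_hyperplane hyperplane_subset_iso_map_image by blast
qed (simp_all add: iso_map_vadd iso_map_vsmul pnorm_iso_map)

end

context balanced_E_space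
begin

theorem iso_to_Kn_of_dim_n:
  assumes "D \<subseteq> E" "kdim_is K D n"
  shows "iso_to_Kn K v n t N D"
proof -
  obtain a where a: "\<forall>j\<le>n. a j \<in> K" "\<exists>j\<le>n. a j \<noteq> 0" and D: "D = hyperplane a"
    using subspace_eq_hyperplane[OF assms] by blast
  show ?thesis
  proof (cases "\<forall>i<n. a i = 0")
    case True
    moreover have "a n \<noteq> 0" using True a(2) by (metis le_neq_implies_less)
    ultimately have "D = Kn K n" unfolding D by (rule hyperplane_eq_Kn)
    then show ?thesis using iso_to_Kn_Kn by simp
  next
    case False
    then obtain k where k: "k < n" "a k \<noteq> 0"
      and k_max: "\<And>i. i < n \<Longrightarrow> v (a i) * t k \<le> v (a k) * t i"
      using exists_max_weight by blast
    obtain g where g: "Kcoeffs g" "g n = 1" "(\<Sum>i<Suc n. g i * a i) = 0"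
      and g_dominant: "\<And>i. i < n \<Longrightarrow> i \<noteq> k \<Longrightarrow> t i * v (Evec g i) < t k * v (Evec g k)"
      using exists_dominant_hyperplane_vector[OF a(1) k] by blast
    obtain lam where lam: "lam \<in> K" "lam \<noteq> 0" "v lam = v (Evec g k)"
      using immediate_value Evec_nonzero_if_last_one[OF g(1,2) k(1)] by metis
    interpret dominated_hyperplane K v n x t s a k g lam
      using a(1) k k_max g g_dominant lam by unfold_locales auto
    show ?thesis unfolding D by (rule iso_to_Kn_hyperplane)
  qed
qed

end

theorem mainTheorem10:
  fixes K :: "'a::field set" and v :: "'a \<Rightarrow> real"
    and n :: nat and x :: "nat \<Rightarrow> 'a" and t :: "nat \<Rightarrow> real"
  assumes abs_v: "nonarch_abs v"
    and subK: "is_subfield K"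
    and complK: "complete_wrt K v"
    and nontriv: "nontrivial_on K v"
    and not_sph: "\<not> spherically_complete K v"
    and sph: "spherically_complete UNIV v"
    and immed: "immediate_ext K v"
    and n_pos: "1 \<le> n"
    and x_notin: "\<forall>i<n. x i \<notin> K"
    and t_pos: "\<forall>i<n. 0 < t i"
  shows
    "(indecomposable K (pnorm n t v) (Espace K n x) \<longrightarrow>
        (\<forall>i<n. \<forall>j<n. distK K v (x i) * t i = distK K v (x j) * t j) \<and> orth_mod K v n x)
     \<and>
     (\<forall>s. (\<forall>i<n. distK K v (x i) * t i = s) \<and> orth_mod K v n x \<longrightarrow>
        (\<forall>phi. klin_functional K (Espace K n x) phi \<longrightarrow>
            opnorm v (pnorm n t v) (Espace K n x) phi
              = (1 / s) * v ((\<Sum>i<n. phi (unitv i) * (- x i)) + phi (xvec n x) * 1))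
        \<and> (\<forall>phi. klin_functional K (Espace K n x) phi \<longrightarrow>
              (\<Sum>i<n. phi (unitv i) * (- x i)) + phi (xvec n x) * 1 \<in> kspan1 K (1 # map x [0..<n]))
        \<and> indecomposable K (pnorm n t v) (Espace K n x)
        \<and> (\<forall>D. ksubspace K D \<and> D \<subseteq> Espace K n x \<and> kdim_is K D n \<longrightarrow>
              iso_to_Kn K v n t (pnorm n t v) D))"
proof -
  interpret E_space K v n x t
    using abs_v subK complK immed n_pos x_notin t_pos by unfold_locales auto
  have part1: "indecomposable K N E \<longrightarrow> (\<forall>i<n. \<forall>j<n. r i * t i = r j * t j) \<and> orth_mod K v n x"
    using balanced_orth_if_indecomposable by blast
  have part2: "(\<forall>phi. klin_functional K E phi \<longrightarrow> opnorm v N E phi = 1 / s * v (dual_image phi))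
      \<and> (\<forall>phi. klin_functional K E phi \<longrightarrow> dual_image phi \<in> kspan1 K (1 # map x [0..<n]))
      \<and> indecomposable K N E
      \<and> (\<forall>D. ksubspace K D \<and> D \<subseteq> E \<and> kdim_is K D n \<longrightarrow> iso_to_Kn K v n t N D)"
    if "(\<forall>i<n. r i * t i = s) \<and> orth_mod K v n x" for s
  proof -
    interpret balanced_E_space K v n x t s
      using that abs_v subK complK immed n_pos x_notin t_pos by unfold_locales auto
    show ?thesis
      using opnorm_eq_dual_image dual_image_in_span indecomposable_E iso_to_Kn_of_dim_n by simp
  qed
  show ?thesis using part1 part2 unfolding dual_image_def by blast
qed

end
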